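(* Let $\alpha\in(0,1)\cup(1,2)$ and let $\rho_{AB}$ be a state on a finite-dimensional $\mathcal{H}_A\otimes\mathcal{H}_B$. Then $$E^F_{(2-\alpha)/\alpha}(A;B)_\rho\geq E^{\mathrm{sq}}_\alpha(A;B)_\rho.$$
   Context: All Hilbert spaces are finite-dimensional and $\log$ is the natural logarithm. For a positive semi-definite $M$ and function $f$, $f(M)$ applies $f$ only to nonzero eigenvalues (negative powers are generalized inverses). For a state $\rho_{ABE}$ and $\alpha\in(0,1)\cup(1,\infty)$, $$I_\alpha(A;B|E)_\rho=\frac{\alpha}{\alpha-1}\log\mathrm{Tr}\Big\{\Big(\rho_E^{(\alpha-1)/2}\,\mathrm{Tr}_A\big\{\rho_{AE}^{(1-\alpha)/2}\rho_{ABE}^{\alpha}\rho_{AE}^{(1-\alpha)/2}\big\}\,\rho_E^{(\alpha-1)/2}\Big)^{1/\alpha}\Big\},$$ and the Rényi squashed entanglement is $E^{\mathrm{sq}}_\alpha(A;B)_\rho=\frac12\inf\{I_\alpha(A;B|E)_\omega:\ \mathrm{Tr}_E\omega_{ABE}=\rho_{AB}\}$ over all extensions on finite-dimensional $\mathcal{H}_E$. For $\beta\in(0,1)\cup(1,\infty)$ the Rényi conditional entropy is $H_\beta(A|B)_\rho=\frac{\beta}{1-\beta}\log\mathrm{Tr}\{(\mathrm{Tr}_A\{\rho_{AB}^\beta\})^{1/\beta}\}$, and the Rényi entanglement of formation is $E^F_\beta(A;B)_\rho=\inf\{H_\beta(A|X)_\sigma:\ \rho_{AB}=\sum_x p_X(x)|\psi^x\rangle\langle\psi^x|_{AB}\}$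 over finite pure-state ensembles, with $\sigma_{XAB}=\sum_x p_X(x)|x\rangle\langle x|_X\otimes|\psi^x\rangle\langle\psi^x|_{AB}$, $\{|x\rangle\}$ orthonormal. *)

theory Defs
  imports "Jordan_Normal_Form.Matrix" "HOL-Library.Extended_Real"
begin

(* A composite system X1 (x) X2 (x) X3 of dimensions d1,d2,d3 is C^(d1*d2*d3) with
   index i = (x1*d2 + x2)*d3 + x3  (standard Kronecker ordering). *)

definition mtrace :: "complex mat \<Rightarrow> complex" where
  "mtrace M = (\<Sum>i<dim_row M. M $$ (i,i))"

definition adj :: "complex mat \<Rightarrow> complex mat" where
  "adj M = mat (dim_col M) (dim_row M) (\<lambda>(i,j). cnj (M $$ (j,i)))"

definition unitary :: "nat \<Rightarrow> complex mat \<Rightarrow> bool" where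
  "unitary n U \<longleftrightarrow> U \<in> carrier_mat n n \<and> adj U * U = 1\<^sub>m n"

definition psd :: "nat \<Rightarrow> complex mat \<Rightarrow> bool" where
  "psd n M \<longleftrightarrow> M \<in> carrier_mat n n \<and> adj M = M \<and>
     (\<forall>v \<in> carrier_vec n. 0 \<le> Re (\<Sum>i<n. cnj (v $ i) * (M *\<^sub>v v) $ i))"

definition density :: "nat \<Rightarrow> complex mat \<Rightarrow> bool" where
  "density n M \<longleftrightarrow> psd n M \<and> mtrace M = 1"

definition mat_fun :: "nat \<Rightarrow> (real \<Rightarrow> real) \<Rightarrow> complex mat \<Rightarrow> complex mat" where
  "mat_fun n f M =
     (let (U, d) = (SOME (U, d). unitary n U \<and>
            M = U * mat n n (\<lambda>(i,j). if i = j then complex_of_real (d i) else 0) * adj U)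
      in U * mat n n (\<lambda>(i,j). if i = j \<and> d i \<noteq> 0 then complex_of_real (f (d i)) else 0) * adj U)"

(* M^a on the support of M (negative a gives the generalized inverse power) *)
definition mat_pow :: "nat \<Rightarrow> complex mat \<Rightarrow> real \<Rightarrow> complex mat" where
  "mat_pow n M a = mat_fun n (\<lambda>x. x powr a) M"

(* partial trace over the middle factor of X1 (x) X2 (x) X3 *)
definition ptrace_mid :: "nat \<Rightarrow> nat \<Rightarrow> nat \<Rightarrow> complex mat \<Rightarrow> complex mat" where
  "ptrace_mid d1 d2 d3 M = mat (d1*d3) (d1*d3) (\<lambda>(i,j).
      \<Sum>k<d2. M $$ (((i div d3)*d2 + k)*d3 + i mod d3, ((j div d3)*d2 + k)*d3 + j mod d3))"

(* X \<mapsto> X1-part (x) I_{X2} (x) X3-part: embeds an operator on X1 (x) X3 into X1 (x) X2 (x) X3 *)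
definition id_mid :: "nat \<Rightarrow> nat \<Rightarrow> nat \<Rightarrow> complex mat \<Rightarrow> complex mat" where
  "id_mid d1 d2 d3 X = mat (d1*d2*d3) (d1*d2*d3) (\<lambda>(i,j).
      if (i div d3) mod d2 = (j div d3) mod d2
      then X $$ ((i div (d2*d3))*d3 + i mod d3, (j div (d2*d3))*d3 + j mod d3) else 0)"

definition swap_sys :: "nat \<Rightarrow> nat \<Rightarrow> complex mat \<Rightarrow> complex mat" where
  "swap_sys d1 d2 M = mat (d2*d1) (d2*d1) (\<lambda>(i,j).
      M $$ ((i mod d1)*d2 + i div d1, (j mod d1)*d2 + j div d1))"

definition renyi_cmi :: "real \<Rightarrow> nat \<Rightarrow> nat \<Rightarrow> nat \<Rightarrow> complex mat \<Rightarrow> real" where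
  "renyi_cmi \<alpha> dA dB dE \<rho> =
    (let \<rho>AE = ptrace_mid dA dB dE \<rho>;
         \<rho>E = ptrace_mid 1 (dA*dB) dE \<rho>;
         S = mat_pow (dA*dE) \<rho>AE ((1-\<alpha>)/2);
         T = ptrace_mid 1 dA (dB*dE)
               (id_mid dA dB dE S * mat_pow (dA*dB*dE) \<rho> \<alpha> * id_mid dA dB dE S);
         R = id_mid 1 dB dE (mat_pow dE \<rho>E ((\<alpha>-1)/2));
         Q = R * T * R
     in \<alpha>/(\<alpha>-1) * ln (Re (mtrace (mat_pow (dB*dE) Q (1/\<alpha>)))))"

definition renyi_sq :: "real \<Rightarrow> nat \<Rightarrow> nat \<Rightarrow> complex mat \<Rightarrow> ereal" where
  "renyi_sq \<alpha> dA dB \<rho> = ereal (1/2) * Inf {ereal (renyi_cmi \<alpha> dA dB dE \<omega>) | dE \<omega>.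
      0 < dE \<and> density (dA*dB*dE) \<omega> \<and> ptrace_mid (dA*dB) dE 1 \<omega> = \<rho>}"

definition renyi_cond_ent :: "real \<Rightarrow> nat \<Rightarrow> nat \<Rightarrow> complex mat \<Rightarrow> real" where
  "renyi_cond_ent \<beta> dA dB \<rho> =
     \<beta>/(1-\<beta>) * ln (Re (mtrace (mat_pow dB (ptrace_mid 1 dA dB (mat_pow (dA*dB) \<rho> \<beta>)) (1/\<beta>))))"

(* classical-quantum state sigma_XAB = sum_{x<n} p(x) |x><x|_X (x) |psi^x><psi^x|_AB,
   written entrywise; X has dimension n, AB has dimension D *)
definition cq_state :: "nat \<Rightarrow> nat \<Rightarrow> (nat \<Rightarrow> real) \<Rightarrow> (nat \<Rightarrow> complex vec) \<Rightarrow> complex mat" where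
  "cq_state n D p \<psi> = mat (n*D) (n*D) (\<lambda>(i,j).
      if i div D = j div D
      then complex_of_real (p (i div D)) * (\<psi> (i div D) $ (i mod D)) * cnj (\<psi> (j div D) $ (j mod D))
      else 0)"

definition ens_avg :: "nat \<Rightarrow> nat \<Rightarrow> (nat \<Rightarrow> real) \<Rightarrow> (nat \<Rightarrow> complex vec) \<Rightarrow> complex mat" where
  "ens_avg n D p \<psi> = mat D D (\<lambda>(i,j).
      \<Sum>x<n. complex_of_real (p x) * (\<psi> x $ i) * cnj (\<psi> x $ j))"

definition renyi_eof :: "real \<Rightarrow> nat \<Rightarrow> nat \<Rightarrow> complex mat \<Rightarrow> ereal" where
  "renyi_eof \<beta> dA dB \<rho> = Inf {ereal (renyi_cond_ent \<beta> dA n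
        (swap_sys n dA (ptrace_mid (n*dA) dB 1 (cq_state n (dA*dB) p \<psi>)))) | n p \<psi>.
      0 < n \<and> (\<forall>x<n. 0 \<le> p x) \<and> (\<Sum>x<n. p x) = 1 \<and>
      (\<forall>x<n. \<psi> x \<in> carrier_vec (dA*dB) \<and> (\<Sum>i<dA*dB. cmod (\<psi> x $ i) ^ 2) = 1) \<and>
      \<rho> = ens_avg n (dA*dB) p \<psi>}"

end

theory Submission
  imports Defs "Jordan_Normal_Form.Schur_Decomposition" "HOL-Analysis.Convex"
begin

text \<open>Fix a pure-state decomposition \<open>\<rho>\<^sub>A\<^sub>B = \<Sum>\<^sub>x p(x) |\<psi>\<^sup>x\<rangle>\<langle>\<psi>\<^sup>x|\<close> and extend it classically to
  \<open>\<omega>\<^sub>A\<^sub>B\<^sub>X = \<Sum>\<^sub>x p(x) |\<psi>\<^sup>x\<rangle>\<langle>\<psi>\<^sup>x| \<otimes> |x\<rangle>\<langle>x|\<close>. Every operator in \<open>I\<^sub>\<alpha>(A;B|X)\<^sub>\<omega>\<close> is block diagonal in x, and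
  on each block the tilted vector \<open>(\<sigma>\<^sub>x\<^sup>(\<^sup>1\<^sup>-\<^sup>\<alpha>\<^sup>)\<^sup>/\<^sup>2 \<otimes> 1) \<psi>\<^sup>x\<close> has marginals on A and B with the same
  nonzero spectrum, where \<open>\<sigma>\<^sub>x\<close> is the marginal of \<open>\<psi>\<^sup>x\<close> on A. With \<open>\<beta> = (2-\<alpha>)/\<alpha>\<close> this gives
  \<open>I\<^sub>\<alpha>(A;B|X)\<^sub>\<omega> = \<alpha>/(\<alpha>-1) log \<Sum>\<^sub>x p(x) Tr \<sigma>\<^sub>x\<^sup>\<beta>\<close>, while
  \<open>H\<^sub>\<beta>(A|X) = \<beta>/(1-\<beta>) log \<Sum>\<^sub>x p(x) (Tr \<sigma>\<^sub>x\<^sup>\<beta>)\<^sup>1\<^sup>/\<^sup>\<beta>\<close>. Jensen's inequality for \<open>t \<mapsto> t\<^sup>1\<^sup>/\<^sup>\<beta>\<close> (convex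
  for \<open>\<alpha> > 1\<close>, concave for \<open>\<alpha> < 1\<close>, matching the sign of \<open>\<alpha> - 1\<close>) compares the two.\<close>

section \<open>Adjoints, unitaries and the spectral theorem\<close>

lemma adj_dims [simp]: "dim_row (adj A) = dim_col A" "dim_col (adj A) = dim_row A"
  by (auto simp: adj_def)

lemma adj_carrier [simp]: "A \<in> carrier_mat n m \<Longrightarrow> adj A \<in> carrier_mat m n"
  by (auto simp: adj_def)

lemma index_adj [simp]: "i < dim_col A \<Longrightarrow> j < dim_row A \<Longrightarrow> adj A $$ (i,j) = cnj (A $$ (j,i))"
  by (auto simp: adj_def)

lemma adj_adj [simp]: "adj (adj A) = A"
  by (rule eq_matI) auto

lemma adj_mult:
  assumes "A \<in> carrier_mat n m" "B \<in> carrier_mat m k"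
  shows "adj (A * B) = adj B * adj A"
  using assms by (intro eq_matI) (auto simp: scalar_prod_def mult.commute)

lemma mult_adj_self_carrier: "A \<in> carrier_mat n m \<Longrightarrow> A * adj A \<in> carrier_mat n n"
  by (meson adj_carrier mult_carrier_mat)

definition real_diag :: "nat \<Rightarrow> (nat \<Rightarrow> real) \<Rightarrow> complex mat" where
  "real_diag n d = mat n n (\<lambda>(i,j). if i = j then complex_of_real (d i) else 0)"

lemma real_diag_carrier [simp]: "real_diag n d \<in> carrier_mat n n"
  by (simp add: real_diag_def)

lemma real_diag_dims [simp]: "dim_row (real_diag n d) = n" "dim_col (real_diag n d) = n"
  by (auto simp: real_diag_def)

lemma index_real_diag [simp]:
  "i < n \<Longrightarrow> j < n \<Longrightarrow> real_diag n d $$ (i,j) = (if i = j then complex_of_real (d i) else 0)"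
  by (simp add: real_diag_def)

lemma adj_real_diag [simp]: "adj (real_diag n d) = real_diag n d"
  by (rule eq_matI) auto

lemma real_diag_mult_vec:
  assumes "v \<in> carrier_vec n"
  shows "real_diag n d *\<^sub>v v = vec n (\<lambda>i. complex_of_real (d i) * v $ i)"
proof (rule eq_vecI)
  fix i assume "i < dim_vec (vec n (\<lambda>i. complex_of_real (d i) * v $ i))"
  then have i: "i < n" by simp
  have "(real_diag n d *\<^sub>v v) $ i = (\<Sum>j<n. (if i = j then complex_of_real (d i) else 0) * v $ j)"
    using assms i by (simp add: scalar_prod_def lessThan_atLeast0)
  also have "\<dots> = (\<Sum>j<n. if i = j then complex_of_real (d i) * v $ j else 0)"
    by (intro sum.cong) auto
  also have "\<dots> = complex_of_real (d i) * v $ i"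
    using i by simp
  finally show "(real_diag n d *\<^sub>v v) $ i = vec n (\<lambda>i. complex_of_real (d i) * v $ i) $ i"
    using i by simp
qed (use assms in auto)

lemma index_mult_real_diag_adj:
  assumes "X \<in> carrier_mat n n" "Y \<in> carrier_mat n n" "i < n" "j < n"
  shows "(X * real_diag n d * adj Y) $$ (i,j) = (\<Sum>k<n. X $$ (i,k) * complex_of_real (d k) * cnj (Y $$ (j,k)))"
proof -
  have "(X * real_diag n d) $$ (i,l) = X $$ (i,l) * complex_of_real (d l)" if "l < n" for l
  proof -
    have "(X * real_diag n d) $$ (i,l) = (\<Sum>k<n. X $$ (i,k) * real_diag n d $$ (k,l))"
      using assms that by (simp add: scalar_prod_def lessThan_atLeast0)
    also have "\<dots> = (\<Sum>k<n. if k = l then X $$ (i,k) * complex_of_real (d k) else 0)"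
      using that by (intro sum.cong) auto
    finally show ?thesis
      using that by simp
  qed
  then show ?thesis
    using assms by (simp add: scalar_prod_def lessThan_atLeast0)
qed

lemma mult_unit_vec_col:
  fixes A :: "'a :: comm_ring_1 mat"
  assumes "A \<in> carrier_mat n m" "i < m"
  shows "A *\<^sub>v unit_vec m i = col A i"
proof (rule eq_vecI)
  fix k assume "k < dim_vec (col A i)"
  then have k: "k < n" using assms by simp
  have "(A *\<^sub>v unit_vec m i) $ k = (\<Sum>j<m. A $$ (k,j) * unit_vec m i $ j)"
    using assms k by (simp add: scalar_prod_def lessThan_atLeast0)
  also have "\<dots> = (\<Sum>j<m. if j = i then A $$ (k,j) else 0)"
    using assms(2) by (intro sum.cong) (auto simp: unit_vec_def)
  finally show "(A *\<^sub>v unit_vec m i) $ k = col A i $ k"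
    using assms k by simp
qed (use assms in auto)

lemma unitary_carrier: "unitary n U \<Longrightarrow> U \<in> carrier_mat n n"
  by (simp add: unitary_def)

lemma unitary_adj_mult: "unitary n U \<Longrightarrow> adj U * U = 1\<^sub>m n"
  by (simp add: unitary_def)

lemma unitary_mult_adj: "unitary n U \<Longrightarrow> U * adj U = 1\<^sub>m n"
  using mat_mult_left_right_inverse[of "adj U" n U] unfolding unitary_def by auto

lemma unitary_mult:
  assumes U: "unitary n U" and V: "unitary n V"
  shows "unitary n (U * V)"
proof -
  have U': "U \<in> carrier_mat n n" and V': "V \<in> carrier_mat n n"
    using U V by (simp_all add: unitary_carrier)
  have "adj (U * V) * (U * V) = adj V * (adj U * (U * V))"
    using U' V' by (simp add: adj_mult assoc_mult_mat[of _ n n _ n _ n])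
  also have "\<dots> = adj V * (adj U * U * V)"
    using U' V' by (simp add: assoc_mult_mat[of "adj U" n n U n V n])
  also have "\<dots> = adj V * (adj U * U) * V"
    using U' V' by (intro assoc_mult_mat[symmetric]) auto
  also have "\<dots> = 1\<^sub>m n"
    using U V V' by (simp add: unitary_adj_mult)
  finally show ?thesis
    using U' V' unfolding unitary_def by auto
qed

lemma unitary_col_nonzero:
  assumes "unitary n U" "i < n"
  shows "col U i \<noteq> 0\<^sub>v n"
proof
  assume "col U i = 0\<^sub>v n"
  then have "(adj U * U) $$ (i,i) = 0"
    using assms unitary_carrier[OF assms(1)] by simp
  then show False
    using assms by (simp add: unitary_adj_mult)
qed

lemma cscalar_prod_self:
  assumes "w \<in> carrier_vec n"
  shows "w \<bullet>c w = complex_of_real (\<Sum>k<n. (cmod (w $ k))^2)"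
  using assms by (auto simp: scalar_prod_def lessThan_atLeast0 complex_norm_square
    simp del: of_real_power intro!: sum.cong)

definition hermitian :: "nat \<Rightarrow> complex mat \<Rightarrow> bool" where
  "hermitian n M \<longleftrightarrow> M \<in> carrier_mat n n \<and> adj M = M"

lemma hermitian_carrier: "hermitian n M \<Longrightarrow> M \<in> carrier_mat n n"
  by (simp add: hermitian_def)

lemma psd_hermitian: "psd n M \<Longrightarrow> hermitian n M"
  by (simp add: psd_def hermitian_def)

lemma hermitian_diagonalization:
  assumes "unitary n U"
  shows "hermitian n (U * real_diag n d * adj U)"
proof -
  have U: "U \<in> carrier_mat n n" using assms by (rule unitary_carrier)
  have "adj (U * real_diag n d * adj U) = adj (adj U) * adj (U * real_diag n d)"
    using U by (intro adj_mult[of _ n n _ n]) auto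
  also have "\<dots> = U * real_diag n d * adj U"
    using U by (simp add: adj_mult[of _ n n _ n] assoc_mult_mat[of _ n n _ n _ n])
  finally show ?thesis
    using U unfolding hermitian_def by auto
qed

lemma unitary_of_corthogonal:
  assumes ws: "set ws \<subseteq> carrier_vec n" "corthogonal ws" "length ws = n"
  shows "\<exists>N. unitary n N \<and> (\<forall>j<n. \<exists>c. col N j = c \<cdot>\<^sub>v ws ! j)"
proof -
  have wsc: "ws ! j \<in> carrier_vec n" if "j < n" for j
    using ws that by auto
  define c where "c j = sqrt (\<Sum>k<n. (cmod (ws ! j $ k))^2)" for j
  have norm: "ws ! j \<bullet>c ws ! j = complex_of_real ((c j)^2)" if "j < n" for j
    using cscalar_prod_self[OF wsc[OF that]] c_def by (simp add: sum_nonneg)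
  have orth: "ws ! i \<bullet>c ws ! j = 0" if "i < n" "j < n" "i \<noteq> j" for i j
    using corthogonalD[OF ws(2)] ws(3) that by auto
  have c0: "c j \<noteq> 0" if "j < n" for j
    using corthogonalD[OF ws(2), of j j] ws(3) that norm[OF that] by auto
  define N where "N = mat n n (\<lambda>(i,j). ws ! j $ i / complex_of_real (c j))"
  have "adj N * N = 1\<^sub>m n"
  proof (rule eq_matI)
    fix i j assume ij: "i < dim_row (1\<^sub>m n)" "j < dim_col (1\<^sub>m n)"
    have "(adj N * N) $$ (i,j)
        = (\<Sum>k<n. cnj (ws ! i $ k / complex_of_real (c i)) * (ws ! j $ k / complex_of_real (c j)))"
      using ij by (simp add: N_def scalar_prod_def lessThan_atLeast0)
    also have "\<dots> = (\<Sum>k<n. ws ! j $ k * cnj (ws ! i $ k)) / (complex_of_real (c i) * complex_of_real (c j))"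
      by (simp add: sum_divide_distrib mult.commute)
    also have "(\<Sum>k<n. ws ! j $ k * cnj (ws ! i $ k)) = ws ! j \<bullet>c ws ! i"
      using ij wsc[of i] by (simp add: scalar_prod_def lessThan_atLeast0)
    finally show "(adj N * N) $$ (i,j) = 1\<^sub>m n $$ (i,j)"
      using ij orth norm c0 by (cases "i = j") (auto simp: power2_eq_square)
  qed (auto simp: N_def)
  then have "unitary n N"
    unfolding unitary_def N_def by auto
  moreover have "col N j = (1 / complex_of_real (c j)) \<cdot>\<^sub>v ws ! j" if "j < n" for j
    using that wsc[OF that] by (intro eq_vecI) (auto simp: N_def)
  ultimately show ?thesis
    by blast
qed

lemma unitary_with_first_col:
  assumes v: "v \<in> carrier_vec n" and v0: "v \<noteq> 0\<^sub>v n"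
  shows "\<exists>N c. unitary n N \<and> col N 0 = c \<cdot>\<^sub>v v"
proof -
  interpret cof_vec_space n "TYPE(complex)" .
  note bc = basis_completion[OF v v0]
  define ws where "ws = gram_schmidt n (basis_completion v)"
  from gram_schmidt_result[OF bc(2) bc(4) bc(5) ws_def]
  have ws: "set ws \<subseteq> carrier_vec n" "corthogonal ws" "length ws = n"
    using bc(6) by auto
  have n: "0 < n"
  proof (rule ccontr)
    assume "\<not> 0 < n"
    then have "v = 0\<^sub>v n" using v by (intro eq_vecI) auto
    then show False using v0 by simp
  qed
  obtain vs where "basis_completion v = v # vs"
    using bc(6,7) n by (cases "basis_completion v") auto
  then have "hd ws = v"
    using gram_schmidt_hd[OF v, of vs] ws_def by simp
  then have ws0: "ws ! 0 = v"
    using hd_conv_nth[of ws] ws(3) n by auto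
  obtain N where "unitary n N" "\<forall>j<n. \<exists>c. col N j = c \<cdot>\<^sub>v ws ! j"
    using unitary_of_corthogonal[OF ws] by blast
  then show ?thesis
    using n ws0 by auto
qed

lemma hermitian_adj_mult_mult:
  assumes A: "hermitian n A" and X: "X \<in> carrier_mat n m"
  shows "hermitian m (adj X * A * X)"
proof -
  have A': "A \<in> carrier_mat n n" and hA: "adj A = A"
    using A by (auto simp: hermitian_def)
  have "adj (adj X * A * X) = adj X * adj (adj X * A)"
    using A' X by (intro adj_mult[of _ m n _ m]) auto
  also have "\<dots> = adj X * A * X"
    using A' X hA by (simp add: adj_mult[of _ m n _ n] assoc_mult_mat[of _ m n _ n _ m])
  finally show ?thesis
    using A' X unfolding hermitian_def by auto
qed

text \<open>Conjugating by a unitary whose first column is an eigenvector deflates a Hermitian matrix;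
  iterating this on the lower block gives the spectral theorem.\<close>

lemma hermitian_deflation:
  assumes A: "hermitian n A" and n: "0 < n"
  shows "\<exists>N e. unitary n N \<and> (\<forall>i<n. (adj N * A * N) $$ (i,0) = (if i = 0 then e else 0))"
proof -
  have A': "A \<in> carrier_mat n n" using A by (rule hermitian_carrier)
  have "\<not> constant (poly (char_poly A))"
    using degree_monic_char_poly[OF A'] constant_degree[of "char_poly A"] n by simp
  then obtain e where "poly (char_poly A) e = 0"
    using fundamental_theorem_of_algebra by blast
  then have "eigenvalue A e"
    using eigenvalue_root_char_poly[OF A'] by simp
  then obtain v where v: "v \<in> carrier_vec n" and v0: "v \<noteq> 0\<^sub>v n" and Av: "A *\<^sub>v v = e \<cdot>\<^sub>v v"
    using A' unfolding eigenvalue_def eigenvector_def by auto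
  obtain N c where N: "unitary n N" and col0: "col N 0 = c \<cdot>\<^sub>v v"
    using unitary_with_first_col[OF v v0] by blast
  have N': "N \<in> carrier_mat n n" using N by (rule unitary_carrier)
  have ANcol: "A *\<^sub>v col N 0 = e \<cdot>\<^sub>v col N 0"
    unfolding col0 using A' v Av by (simp add: mult_mat_vec smult_smult_assoc mult.commute)
  have AN0: "(A * N) $$ (k,0) = e * N $$ (k,0)" if "k < n" for k
  proof -
    have "(A * N) $$ (k,0) = (A *\<^sub>v col N 0) $ k"
      using that A' N' n by simp
    then show ?thesis
      unfolding ANcol using that N' n by simp
  qed
  have "(adj N * A * N) $$ (i,0) = (if i = 0 then e else 0)" if i: "i < n" for i
  proof -
    have "(adj N * A * N) $$ (i,0) = (\<Sum>k<n. adj N $$ (i,k) * (A * N) $$ (k,0))"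
      using i A' N' n
        by (simp add: assoc_mult_mat[of _ n n _ n _ n] scalar_prod_def lessThan_atLeast0)
    also have "\<dots> = e * (\<Sum>k<n. adj N $$ (i,k) * N $$ (k,0))"
      by (simp add: AN0 sum_distrib_left mult.left_commute)
    also have "(\<Sum>k<n. adj N $$ (i,k) * N $$ (k,0)) = (adj N * N) $$ (i,0)"
      using i N' n by (simp add: scalar_prod_def lessThan_atLeast0)
    finally show ?thesis
      using i n by (simp add: unitary_adj_mult[OF N])
  qed
  then show ?thesis using N by blast
qed

definition one_plus_mat :: "nat \<Rightarrow> complex mat \<Rightarrow> complex mat" where
  "one_plus_mat n U =
     mat n n (\<lambda>(i,j). if i = 0 \<or> j = 0 then (if i = j then 1 else 0) else U $$ (i - 1, j - 1))"

lemma unitary_one_plus_mat: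
  assumes U: "unitary m U"
  shows "unitary (Suc m) (one_plus_mat (Suc m) U)"
proof -
  define F where "F = one_plus_mat (Suc m) U"
  have U': "U \<in> carrier_mat m m" using U by (rule unitary_carrier)
  have "adj F * F = 1\<^sub>m (Suc m)"
  proof (rule eq_matI)
    fix i j assume ij: "i < dim_row (1\<^sub>m (Suc m))" "j < dim_col (1\<^sub>m (Suc m))"
    have "(adj F * F) $$ (i,j) = (\<Sum>k<Suc m. cnj (F $$ (k,i)) * F $$ (k,j))"
      using ij by (simp add: F_def one_plus_mat_def scalar_prod_def lessThan_atLeast0)
    also have "\<dots> = cnj (F $$ (0,i)) * F $$ (0,j) + (\<Sum>k<m. cnj (F $$ (Suc k,i)) * F $$ (Suc k,j))"
      by (simp only: sum.lessThan_Suc_shift)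
    also have "\<dots> = 1\<^sub>m (Suc m) $$ (i,j)"
    proof (cases "i = 0 \<or> j = 0")
      case True
      then show ?thesis using ij by (auto simp: F_def one_plus_mat_def)
    next
      case False
      then obtain i' j' where i': "i = Suc i'" and j': "j = Suc j'"
        by (cases i; cases j) auto
      have "(\<Sum>k<m. cnj (F $$ (Suc k,i)) * F $$ (Suc k,j)) = (adj U * U) $$ (i', j')"
        using ij U' i' j' by (auto simp: F_def one_plus_mat_def scalar_prod_def lessThan_atLeast0)
      then show ?thesis
        using ij i' j' by (simp add: F_def one_plus_mat_def unitary_adj_mult[OF U])
    qed
    finally show "(adj F * F) $$ (i,j) = 1\<^sub>m (Suc m) $$ (i,j)" .
  qed (auto simp: F_def one_plus_mat_def)
  then show ?thesis
    unfolding unitary_def F_def by (auto simp: one_plus_mat_def)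
qed

lemma one_plus_mat_diagonalization:
  assumes A: "hermitian (Suc m) A"
    and col0: "\<And>i. i < Suc m \<Longrightarrow> A $$ (i,0) = (if i = 0 then e else 0)"
    and U: "unitary m U"
    and lower: "mat m m (\<lambda>(i,j). A $$ (Suc i, Suc j)) = U * real_diag m d * adj U"
  shows "A = one_plus_mat (Suc m) U * real_diag (Suc m) (\<lambda>i. if i = 0 then Re e else d (i - 1))
           * adj (one_plus_mat (Suc m) U)"
    (is "A = ?F * real_diag _ ?d * adj ?F")
proof (rule eq_matI)
  have A': "A \<in> carrier_mat (Suc m) (Suc m)" and hA: "adj A = A"
    using A by (auto simp: hermitian_def)
  have U': "U \<in> carrier_mat m m" using U by (rule unitary_carrier)
  have F: "?F \<in> carrier_mat (Suc m) (Suc m)" by (simp add: one_plus_mat_def)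
  have row0: "A $$ (0,j) = cnj (A $$ (j,0))" if "j < Suc m" for j
    using that A' arg_cong[OF hA, of "\<lambda>M. M $$ (0,j)"] by simp
  have "A $$ (0,0) = e"
    using col0[of 0] by simp
  then have cnj_e: "cnj e = e"
    using row0[of 0] by (metis zero_less_Suc)
  then have e: "complex_of_real (Re e) = e"
    by (simp add: complex_eq_iff)
  fix i j assume "i < dim_row (?F * real_diag (Suc m) ?d * adj ?F)" "j < dim_col (?F * real_diag (Suc m) ?d * adj ?F)"
  then have i: "i < Suc m" and j: "j < Suc m" using F by auto
  have "(?F * real_diag (Suc m) ?d * adj ?F) $$ (i,j)
      = ?F $$ (i,0) * complex_of_real (?d 0) * cnj (?F $$ (j,0))
        + (\<Sum>k<m. ?F $$ (i,Suc k) * complex_of_real (?d (Suc k)) * cnj (?F $$ (j,Suc k)))"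
    using index_mult_real_diag_adj[OF F F i j] by (simp only: sum.lessThan_Suc_shift)
  also have "\<dots> = A $$ (i,j)"
  proof (cases i)
    case 0
    have "A $$ (i,j) = cnj (if j = 0 then e else 0)"
      using row0[OF j] col0[OF j] 0 by simp
    then show ?thesis
      using 0 j e cnj_e by (simp add: one_plus_mat_def)
  next
    case (Suc i')
    show ?thesis
    proof (cases j)
      case 0
      then show ?thesis
        using i j Suc col0[OF i] by (simp add: one_plus_mat_def)
    next
      case (Suc j')
      have "(\<Sum>k<m. ?F $$ (i,Suc k) * complex_of_real (?d (Suc k)) * cnj (?F $$ (j,Suc k)))
          = (\<Sum>k<m. U $$ (i',k) * complex_of_real (d k) * cnj (U $$ (j',k)))"
        using i j \<open>i = Suc i'\<close> Suc by (intro sum.cong) (auto simp: one_plus_mat_def)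
      also have "\<dots> = (U * real_diag m d * adj U) $$ (i', j')"
        using index_mult_real_diag_adj[OF U' U'] i j \<open>i = Suc i'\<close> Suc by simp
      also have "\<dots> = A $$ (i,j)"
        using i j \<open>i = Suc i'\<close> Suc by (simp flip: lower)
      finally show ?thesis
        using i j \<open>i = Suc i'\<close> Suc by (simp add: one_plus_mat_def)
    qed
  qed
  finally show "A $$ (i,j) = (?F * real_diag (Suc m) ?d * adj ?F) $$ (i,j)" by simp
qed (use A in \<open>auto simp: hermitian_def one_plus_mat_def\<close>)

lemma hermitian_lower_block:
  assumes "hermitian (Suc m) A"
  shows "hermitian m (mat m m (\<lambda>(i,j). A $$ (Suc i, Suc j)))"
proof -
  have A: "A \<in> carrier_mat (Suc m) (Suc m)" and adj_A: "adj A = A"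
    using assms by (auto simp: hermitian_def)
  have "adj (mat m m (\<lambda>(i,j). A $$ (Suc i, Suc j))) $$ (i,j) = adj A $$ (Suc i, Suc j)"
    if "i < m" "j < m" for i j
    using that A by simp
  then show ?thesis
    unfolding hermitian_def adj_A by (auto intro!: eq_matI)
qed

lemma unitary_conjugate_back:
  assumes N: "unitary n N" and A: "A \<in> carrier_mat n n"
  shows "N * (adj N * A * N) * adj N = A"
proof -
  have N': "N \<in> carrier_mat n n" using N by (rule unitary_carrier)
  have "N * (adj N * A * N) * adj N = (N * adj N) * A * (N * adj N)"
    using N' A by (simp add: assoc_mult_mat[of _ n n _ n _ n] mult_carrier_mat[of _ n n])
  then show ?thesis
    using A by (simp add: unitary_mult_adj[OF N])
qed

theorem hermitian_unitary_diagonalization: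
  assumes "hermitian n A"
  shows "\<exists>U d. unitary n U \<and> A = U * real_diag n d * adj U"
  using assms
proof (induction n arbitrary: A)
  case 0
  then show ?case
    by (intro exI[of _ "1\<^sub>m 0"]) (auto simp: unitary_def hermitian_def intro!: eq_matI)
next
  case (Suc m A)
  have A: "A \<in> carrier_mat (Suc m) (Suc m)" using Suc.prems by (rule hermitian_carrier)
  obtain N e where N: "unitary (Suc m) N"
    and col0: "\<And>i. i < Suc m \<Longrightarrow> (adj N * A * N) $$ (i,0) = (if i = 0 then e else 0)"
    using hermitian_deflation[OF Suc.prems] by blast
  have N': "N \<in> carrier_mat (Suc m) (Suc m)" using N by (rule unitary_carrier)
  define A' where "A' = adj N * A * N"
  have hA': "hermitian (Suc m) A'"
    unfolding A'_def using hermitian_adj_mult_mult[OF Suc.prems N'] .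
  define B where "B = mat m m (\<lambda>(i,j). A' $$ (Suc i, Suc j))"
  have "hermitian m B"
    unfolding B_def by (rule hermitian_lower_block[OF hA'])
  then obtain U d where U: "unitary m U" and B: "B = U * real_diag m d * adj U"
    using Suc.IH by blast
  define F where "F = one_plus_mat (Suc m) U"
  define d' where "d' i = (if i = 0 then Re e else d (i - 1))" for i
  have F: "F \<in> carrier_mat (Suc m) (Suc m)" by (simp add: F_def one_plus_mat_def)
  have A'F: "A' = F * real_diag (Suc m) d' * adj F"
    unfolding F_def d'_def using one_plus_mat_diagonalization[OF hA' _ U B[unfolded B_def]] col0
    by (simp add: A'_def)
  have "A = N * A' * adj N"
    unfolding A'_def by (rule unitary_conjugate_back[OF N A, symmetric])
  also have "\<dots> = (N * F) * real_diag (Suc m) d' * adj (N * F)"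
    unfolding A'F using N' F
    by (simp add: adj_mult[of N "Suc m" "Suc m" F "Suc m"] assoc_mult_mat[of _ "Suc m" "Suc m" _ "Suc m" _ "Suc m"]
        mult_carrier_mat[of _ "Suc m" "Suc m"])
  finally show ?case
    using unitary_mult[OF N unitary_one_plus_mat[OF U]] F_def by blast
qed

section \<open>Functional calculus\<close>

definition on_support :: "(real \<Rightarrow> real) \<Rightarrow> real \<Rightarrow> real" where
  "on_support f x = (if x = 0 then 0 else f x)"

lemma on_support_powr [simp]: "on_support (\<lambda>x. x powr a) x = x powr a"
  by (simp add: on_support_def)

definition eigenpair :: "nat \<Rightarrow> complex mat \<Rightarrow> complex vec \<Rightarrow> real \<Rightarrow> bool" where
  "eigenpair n M v \<mu> \<longleftrightarrow> v \<in> carrier_vec n \<and> v \<noteq> 0\<^sub>v n \<and> M *\<^sub>v v = complex_of_real \<mu> \<cdot>\<^sub>v v"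

lemma nonzero_vec_index:
  "v \<in> carrier_vec n \<Longrightarrow> v \<noteq> 0\<^sub>v n \<Longrightarrow> \<exists>i<n. v $ i \<noteq> 0"
  by (metis carrier_vecD eq_vecI index_zero_vec(1,2))

lemma index_mult_mat_vec_sum:
  "A \<in> carrier_mat n m \<Longrightarrow> v \<in> carrier_vec m \<Longrightarrow> i < n \<Longrightarrow> (A *\<^sub>v v) $ i = (\<Sum>j<m. A $$ (i,j) * v $ j)"
  by (simp add: scalar_prod_def lessThan_atLeast0)

lemma eigenpair_col_diagonalization:
  assumes U: "unitary n U" and i: "i < n"
  shows "eigenpair n (U * real_diag n d * adj U) (col U i) (d i)"
proof -
  have U': "U \<in> carrier_mat n n" using U by (rule unitary_carrier)
  have M: "U * real_diag n d * adj U \<in> carrier_mat n n"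
    using U' by (meson adj_carrier real_diag_carrier mult_carrier_mat)
  have "(U * real_diag n d * adj U) * U = U * real_diag n d"
    using U'
      by (simp add: assoc_mult_mat[of _ n n _ n _ n] mult_carrier_mat[of _ n n] unitary_adj_mult[OF U])
  then have "(U * real_diag n d * adj U) *\<^sub>v col U i = U *\<^sub>v col (real_diag n d) i"
    using col_mult2[OF M U' i] col_mult2[OF U' real_diag_carrier i] by simp
  also have "col (real_diag n d) i = complex_of_real (d i) \<cdot>\<^sub>v unit_vec n i"
    using i by (intro eq_vecI) (auto simp: unit_vec_def)
  also have "U *\<^sub>v (complex_of_real (d i) \<cdot>\<^sub>v unit_vec n i) = complex_of_real (d i) \<cdot>\<^sub>v col U i"
    using U' i by (simp add: mult_mat_vec[of _ n n] mult_unit_vec_col)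
  finally show ?thesis
    unfolding eigenpair_def using unitary_col_nonzero[OF U i] U' i by auto
qed

lemma assoc_mult_mat3_vec:
  assumes A: "A \<in> carrier_mat n n" and B: "B \<in> carrier_mat n n" and C: "C \<in> carrier_mat n n"
    and v: "v \<in> carrier_vec n"
  shows "(A * B * C) *\<^sub>v v = A *\<^sub>v (B *\<^sub>v (C *\<^sub>v v))"
proof -
  have "(A * B * C) *\<^sub>v v = (A * B) *\<^sub>v (C *\<^sub>v v)"
    using assoc_mult_mat_vec[OF mult_carrier_mat[OF A B] C v] .
  also have "\<dots> = A *\<^sub>v (B *\<^sub>v (C *\<^sub>v v))"
    using assoc_mult_mat_vec[OF A B mult_mat_vec_carrier[OF C v]] .
  finally show ?thesis .
qed

lemma unitary_adj_mult_vec_cancel: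
  assumes U: "unitary n U" and x: "x \<in> carrier_vec n"
  shows "adj U *\<^sub>v (U *\<^sub>v x) = x" and "U *\<^sub>v (adj U *\<^sub>v x) = x"
proof -
  have U': "U \<in> carrier_mat n n" using U by (rule unitary_carrier)
  have "adj U *\<^sub>v (U *\<^sub>v x) = (adj U * U) *\<^sub>v x"
    using assoc_mult_mat_vec[OF adj_carrier[OF U'] U' x] by simp
  then show "adj U *\<^sub>v (U *\<^sub>v x) = x"
    using x by (simp add: unitary_adj_mult[OF U])
  have "U *\<^sub>v (adj U *\<^sub>v x) = (U * adj U) *\<^sub>v x"
    using assoc_mult_mat_vec[OF U' adj_carrier[OF U'] x] by simp
  then show "U *\<^sub>v (adj U *\<^sub>v x) = x"
    using x by (simp add: unitary_mult_adj[OF U])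
qed

lemma diagonalization_mult_eigenvector:
  assumes U: "unitary n U" and v: "v \<in> carrier_vec n"
    and ev: "(U * real_diag n d * adj U) *\<^sub>v v = complex_of_real \<mu> \<cdot>\<^sub>v v"
  shows "(U * real_diag n (\<lambda>i. g (d i)) * adj U) *\<^sub>v v = complex_of_real (g \<mu>) \<cdot>\<^sub>v v"
proof -
  have U': "U \<in> carrier_mat n n" using U by (rule unitary_carrier)
  have mult3: "(U * D * adj U) *\<^sub>v v = U *\<^sub>v (D *\<^sub>v (adj U *\<^sub>v v))" if D: "D \<in> carrier_mat n n" for D
    using assoc_mult_mat3_vec[OF U' D adj_carrier[OF U'] v] .
  define w where "w = adj U *\<^sub>v v"
  have w: "w \<in> carrier_vec n"
    unfolding w_def using mult_mat_vec_carrier[OF adj_carrier[OF U'] v] .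
  have "adj U *\<^sub>v (U *\<^sub>v (real_diag n d *\<^sub>v w)) = adj U *\<^sub>v (complex_of_real \<mu> \<cdot>\<^sub>v v)"
    using ev mult3[of "real_diag n d"] by (simp add: w_def)
  moreover have "adj U *\<^sub>v (U *\<^sub>v (real_diag n d *\<^sub>v w)) = real_diag n d *\<^sub>v w"
    using unitary_adj_mult_vec_cancel(1)[OF U mult_mat_vec_carrier[OF real_diag_carrier w]] .
  moreover have "adj U *\<^sub>v (complex_of_real \<mu> \<cdot>\<^sub>v v) = complex_of_real \<mu> \<cdot>\<^sub>v w"
    using U' v by (simp add: mult_mat_vec[OF adj_carrier[OF U'] v] w_def)
  ultimately have dw: "real_diag n d *\<^sub>v w = complex_of_real \<mu> \<cdot>\<^sub>v w"
    by simp
  have "complex_of_real (g (d i)) * w $ i = complex_of_real (g \<mu>) * w $ i" if i: "i < n" for i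
  proof -
    have "complex_of_real (d i) * w $ i = complex_of_real \<mu> * w $ i"
      using arg_cong[OF dw, of "\<lambda>x. x $ i"] w i by (simp add: real_diag_mult_vec)
    then have "d i = \<mu> \<or> w $ i = 0" by auto
    then show ?thesis by auto
  qed
  then have "real_diag n (\<lambda>i. g (d i)) *\<^sub>v w = complex_of_real (g \<mu>) \<cdot>\<^sub>v w"
    using w by (intro eq_vecI) (auto simp: real_diag_mult_vec)
  then have "(U * real_diag n (\<lambda>i. g (d i)) * adj U) *\<^sub>v v = complex_of_real (g \<mu>) \<cdot>\<^sub>v (U *\<^sub>v w)"
    using mult3[of "real_diag n (\<lambda>i. g (d i))"] U' w
      by (simp add: mult_mat_vec[of _ n n] w_def)
  also have "U *\<^sub>v w = v"
    using unitary_adj_mult_vec_cancel(2)[OF U v] by (simp add: w_def)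
  finally show ?thesis .
qed

lemma diagonalization_eqI:
  assumes U: "unitary n U" and W: "W \<in> carrier_mat n n"
    and act: "\<And>v \<mu>. eigenpair n (U * real_diag n d * adj U) v \<mu> \<Longrightarrow> W *\<^sub>v v = complex_of_real (g \<mu>) \<cdot>\<^sub>v v"
  shows "W = U * real_diag n (\<lambda>i. g (d i)) * adj U"
proof -
  have U': "U \<in> carrier_mat n n" using U by (rule unitary_carrier)
  have WU: "W * U = U * real_diag n (\<lambda>i. g (d i))"
  proof (rule mat_col_eqI)
    fix i assume "i < dim_col (U * real_diag n (\<lambda>i. g (d i)))"
    then have i: "i < n" using U' by simp
    have "col (W * U) i = complex_of_real (g (d i)) \<cdot>\<^sub>v col U i"
      using col_mult2[OF W U' i] act[OF eigenpair_col_diagonalization[OF U i]] by simp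
    also have "\<dots> = U *\<^sub>v (complex_of_real (g (d i)) \<cdot>\<^sub>v unit_vec n i)"
      using U' i by (simp add: mult_mat_vec[of _ n n] mult_unit_vec_col)
    also have "complex_of_real (g (d i)) \<cdot>\<^sub>v unit_vec n i = col (real_diag n (\<lambda>i. g (d i))) i"
      using i by (intro eq_vecI) (auto simp: unit_vec_def)
    finally show "col (W * U) i = col (U * real_diag n (\<lambda>i. g (d i))) i"
      using col_mult2[OF U' real_diag_carrier i] by simp
  qed (use W U' in auto)
  have "W = W * (U * adj U)"
    using W by (simp add: unitary_mult_adj[OF U])
  also have "\<dots> = (W * U) * adj U"
    using W U' by (simp add: assoc_mult_mat[of _ n n _ n _ n])
  finally show ?thesis unfolding WU .
qed

lemma mat_fun_diagonalization:
  assumes "hermitian n M"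
  shows "\<exists>U d. unitary n U \<and> M = U * real_diag n d * adj U \<and>
           mat_fun n f M = U * real_diag n (\<lambda>i. on_support f (d i)) * adj U"
proof -
  let ?P = "\<lambda>(U, d). unitary n U \<and> M = U * mat n n (\<lambda>(i,j). if i = j then complex_of_real (d i) else 0) * adj U"
  have "\<exists>x. ?P x"
    using hermitian_unitary_diagonalization[OF assms] unfolding real_diag_def by auto
  moreover obtain U d where ud: "(SOME x. ?P x) = (U, d)"
    by (cases "SOME x. ?P x") auto
  ultimately have "?P (U, d)"
    using someI_ex[of ?P] by simp
  moreover have "mat n n (\<lambda>(i,j). if i = j \<and> d i \<noteq> 0 then complex_of_real (f (d i)) else 0)
      = real_diag n (\<lambda>i. on_support f (d i))"
    by (intro eq_matI) (auto simp: real_diag_def on_support_def)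
  ultimately show ?thesis
    unfolding mat_fun_def ud by (auto simp: real_diag_def)
qed

lemma mat_fun_eqI:
  assumes M: "hermitian n M" and W: "W \<in> carrier_mat n n"
    and act: "\<And>v \<mu>. eigenpair n M v \<mu> \<Longrightarrow> W *\<^sub>v v = complex_of_real (on_support f \<mu>) \<cdot>\<^sub>v v"
  shows "mat_fun n f M = W"
proof -
  obtain U d where U: "unitary n U" and M_eq: "M = U * real_diag n d * adj U"
    and f_eq: "mat_fun n f M = U * real_diag n (\<lambda>i. on_support f (d i)) * adj U"
    using mat_fun_diagonalization[OF M] by blast
  show ?thesis
    unfolding f_eq by (rule diagonalization_eqI[OF U W, symmetric]) (use act M_eq in auto)
qed

lemma mat_fun_mult_eigenvector:
  assumes M: "hermitian n M" and v: "v \<in> carrier_vec n" and ev: "M *\<^sub>v v = complex_of_real \<mu> \<cdot>\<^sub>v v"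
  shows "mat_fun n f M *\<^sub>v v = complex_of_real (on_support f \<mu>) \<cdot>\<^sub>v v"
proof -
  obtain U d where U: "unitary n U" and M_eq: "M = U * real_diag n d * adj U"
    and f_eq: "mat_fun n f M = U * real_diag n (\<lambda>i. on_support f (d i)) * adj U"
    using mat_fun_diagonalization[OF M] by blast
  show ?thesis
    unfolding f_eq by (rule diagonalization_mult_eigenvector[OF U v]) (use ev M_eq in simp)
qed

lemma hermitian_mat_fun:
  assumes "hermitian n M"
  shows "hermitian n (mat_fun n f M)"
proof -
  obtain U d where "unitary n U"
    and "mat_fun n f M = U * real_diag n (\<lambda>i. on_support f (d i)) * adj U"
    using mat_fun_diagonalization[OF assms] by blast
  then show ?thesis
    using hermitian_diagonalization by simp
qed

lemma mat_fun_carrier: "hermitian n M \<Longrightarrow> mat_fun n f M \<in> carrier_mat n n"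
  using hermitian_mat_fun hermitian_carrier by blast

lemma hermitian_mat_pow: "hermitian n M \<Longrightarrow> hermitian n (mat_pow n M a)"
  unfolding mat_pow_def by (rule hermitian_mat_fun)

lemma mat_pow_carrier: "hermitian n M \<Longrightarrow> mat_pow n M a \<in> carrier_mat n n"
  unfolding mat_pow_def by (rule mat_fun_carrier)

lemma cnj_mult_self: "cnj z * z = complex_of_real ((cmod z)^2)"
  by (metis complex_norm_square mult.commute)

lemma psd_eigenvalue_nonneg:
  assumes "psd n M" "eigenpair n M v \<mu>"
  shows "0 \<le> \<mu>"
proof -
  have v: "v \<in> carrier_vec n" and v0: "v \<noteq> 0\<^sub>v n" and ev: "M *\<^sub>v v = complex_of_real \<mu> \<cdot>\<^sub>v v"
    using assms(2) unfolding eigenpair_def by auto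
  have "0 \<le> Re (\<Sum>i<n. cnj (v $ i) * (M *\<^sub>v v) $ i)"
    using assms(1) v unfolding psd_def by auto
  also have "(\<Sum>i<n. cnj (v $ i) * (M *\<^sub>v v) $ i) = (\<Sum>i<n. complex_of_real (\<mu> * (cmod (v $ i))^2))"
    using ev v by (intro sum.cong) (auto simp: cnj_mult_self)
  finally have "0 \<le> \<mu> * (\<Sum>i<n. (cmod (v $ i))^2)"
    by (simp add: sum_distrib_left flip: of_real_sum)
  moreover obtain i where i: "i < n" "v $ i \<noteq> 0"
    using nonzero_vec_index[OF v v0] by blast
  then have "0 < (\<Sum>i<n. (cmod (v $ i))^2)"
    by (intro sum_pos2[of _ i]) auto
  ultimately show ?thesis
    by (simp add: zero_le_mult_iff)
qed

lemma map_mat_cnj_cnj [simp]: "map_mat cnj (map_mat cnj M) = M"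
  by (rule eq_matI) auto

lemma map_vec_cnj_cnj [simp]: "map_vec cnj (map_vec cnj v) = v"
  by (rule eq_vecI) auto

lemma map_mat_cnj_mult_vec:
  assumes A: "A \<in> carrier_mat n m" and v: "v \<in> carrier_vec m"
  shows "map_mat cnj A *\<^sub>v v = map_vec cnj (A *\<^sub>v map_vec cnj v)"
proof (rule eq_vecI)
  fix i assume "i < dim_vec (map_vec cnj (A *\<^sub>v map_vec cnj v))"
  then have i: "i < n" using A by simp
  have "(map_mat cnj A *\<^sub>v v) $ i = (\<Sum>j<m. cnj (A $$ (i,j)) * v $ j)"
    using A v i by (simp add: scalar_prod_def lessThan_atLeast0)
  also have "\<dots> = cnj (\<Sum>j<m. A $$ (i,j) * cnj (v $ j))"
    by simp
  also have "\<dots> = map_vec cnj (A *\<^sub>v map_vec cnj v) $ i"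
    using A v i by (simp add: scalar_prod_def lessThan_atLeast0)
  finally show "(map_mat cnj A *\<^sub>v v) $ i = map_vec cnj (A *\<^sub>v map_vec cnj v) $ i" .
qed (use A in simp)

lemma adj_map_mat_cnj: "adj (map_mat cnj M) = map_mat cnj (adj M)"
  by (rule eq_matI) auto

lemma hermitian_map_mat_cnj: "hermitian n M \<Longrightarrow> hermitian n (map_mat cnj M)"
  by (simp add: hermitian_def adj_map_mat_cnj)

lemma mat_fun_map_mat_cnj:
  assumes hM: "hermitian n M"
  shows "mat_fun n f (map_mat cnj M) = map_mat cnj (mat_fun n f M)"
proof (rule mat_fun_eqI[OF hermitian_map_mat_cnj[OF hM]])
  have M: "M \<in> carrier_mat n n" using hM unfolding hermitian_def by auto
  have F: "mat_fun n f M \<in> carrier_mat n n" using mat_fun_carrier[OF hM] .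
  show "map_mat cnj (mat_fun n f M) \<in> carrier_mat n n" using F by simp
  fix v \<mu> assume ev: "eigenpair n (map_mat cnj M) v \<mu>"
  hence v: "v \<in> carrier_vec n" and e: "map_mat cnj M *\<^sub>v v = complex_of_real \<mu> \<cdot>\<^sub>v v"
    unfolding eigenpair_def by auto
  have "M *\<^sub>v map_vec cnj v = map_vec cnj (map_mat cnj M *\<^sub>v v)"
    using map_mat_cnj_mult_vec[of "map_mat cnj M" n n "map_vec cnj v"] M v by simp
  also have "\<dots> = complex_of_real \<mu> \<cdot>\<^sub>v map_vec cnj v"
    unfolding e using v by (intro eq_vecI) auto
  finally have "mat_fun n f M *\<^sub>v map_vec cnj v = complex_of_real (on_support f \<mu>) \<cdot>\<^sub>v map_vec cnj v"
    using mat_fun_mult_eigenvector[OF hM] v by simp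
  hence "map_vec cnj (mat_fun n f M *\<^sub>v map_vec cnj v) = complex_of_real (on_support f \<mu>) \<cdot>\<^sub>v v"
    using v by (auto intro!: eq_vecI)
  thus "map_mat cnj (mat_fun n f M) *\<^sub>v v = complex_of_real (on_support f \<mu>) \<cdot>\<^sub>v v"
    using map_mat_cnj_mult_vec[OF F v] by simp
qed

lemma mtrace_map_mat_cnj: "M \<in> carrier_mat n n \<Longrightarrow> mtrace (map_mat cnj M) = cnj (mtrace M)"
  unfolding mtrace_def by (auto intro: sum.cong)

lemma mtrace_mult_comm:
  assumes "A \<in> carrier_mat n m" "B \<in> carrier_mat m n"
  shows "mtrace (A * B) = mtrace (B * A)"
proof -
  have "mtrace (A * B) = (\<Sum>i<n. \<Sum>j<m. A $$ (i,j) * B $$ (j,i))"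
    unfolding mtrace_def using assms by (simp add: scalar_prod_def lessThan_atLeast0)
  also have "\<dots> = (\<Sum>j<m. \<Sum>i<n. B $$ (j,i) * A $$ (i,j))"
    by (subst sum.swap) (simp add: mult.commute)
  also have "\<dots> = mtrace (B * A)"
    unfolding mtrace_def using assms by (simp add: scalar_prod_def lessThan_atLeast0)
  finally show ?thesis .
qed

lemma mtrace_real_diag: "mtrace (real_diag n d) = complex_of_real (\<Sum>i<n. d i)"
  unfolding mtrace_def by simp

lemma mtrace_diagonalization:
  assumes U: "unitary n U"
  shows "mtrace (U * real_diag n d * adj U) = complex_of_real (\<Sum>i<n. d i)"
proof -
  have U': "U \<in> carrier_mat n n" using U by (rule unitary_carrier)
  have "mtrace (U * real_diag n d * adj U) = mtrace (U * (real_diag n d * adj U))"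
    using U' by (simp add: assoc_mult_mat[of _ n n _ n _ n])
  also have "\<dots> = mtrace ((real_diag n d * adj U) * U)"
    using U' by (intro mtrace_mult_comm[of _ n n]) (auto intro: mult_carrier_mat)
  also have "\<dots> = mtrace (real_diag n d)"
    using U' by (simp add: assoc_mult_mat[of _ n n _ n _ n] unitary_adj_mult[OF U])
  finally show ?thesis by (simp add: mtrace_real_diag)
qed

lemma mtrace_mat_fun_spectrum:
  assumes hM: "hermitian n M"
  shows "\<exists>d. mtrace M = complex_of_real (\<Sum>i<n. d i) \<and>
     mtrace (mat_fun n f M) = complex_of_real (\<Sum>i<n. on_support f (d i)) \<and>
     (psd n M \<longrightarrow> (\<forall>i<n. d i \<ge> 0))"
proof -
  obtain U d where U: "unitary n U" and M: "M = U * real_diag n d * adj U"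
    and mf: "mat_fun n f M = U * real_diag n (\<lambda>i. on_support f (d i)) * adj U"
    using mat_fun_diagonalization[OF hM] by blast
  have "psd n M \<longrightarrow> (\<forall>i<n. d i \<ge> 0)"
  proof (intro impI allI)
    fix i assume p: "psd n M" and i: "i < n"
    have "eigenpair n M (col U i) (d i)" using eigenpair_col_diagonalization[OF U i] M by simp
    thus "d i \<ge> 0" using psd_eigenvalue_nonneg[OF p] by simp
  qed
  moreover have "mtrace M = complex_of_real (\<Sum>i<n. d i)"
    using mtrace_diagonalization[OF U] M by simp
  moreover have "mtrace (mat_fun n f M) = complex_of_real (\<Sum>i<n. on_support f (d i))"
    using mtrace_diagonalization[OF U] mf by simp
  ultimately show ?thesis by blast
qed

lemma hermitian_mtrace_real:
  assumes "hermitian n M"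
  shows "mtrace M = complex_of_real (Re (mtrace M))"
  using mtrace_mat_fun_spectrum[OF assms, of id] by auto

lemma psd_mult_adj:
  assumes X: "X \<in> carrier_mat k m"
  shows "psd k (X * adj X)"
proof -
  have XX: "X * adj X \<in> carrier_mat k k" using X by (meson adj_carrier mult_carrier_mat)
  have h: "adj (X * adj X) = X * adj X" using X adj_mult[of X k m "adj X" k] by simp
  have "0 \<le> Re (\<Sum>i<k. cnj (v $ i) * ((X * adj X) *\<^sub>v v) $ i)" if v: "v \<in> carrier_vec k" for v
  proof -
    define w where "w = adj X *\<^sub>v v"
    have w: "w \<in> carrier_vec m"
      unfolding w_def using mult_mat_vec_carrier[OF adj_carrier[OF X] v] .
    have Xw: "(X * adj X) *\<^sub>v v = X *\<^sub>v w"
      using assoc_mult_mat_vec[OF X adj_carrier[OF X] v] w_def by simp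
    have "(\<Sum>i<k. cnj (v $ i) * ((X * adj X) *\<^sub>v v) $ i) = (\<Sum>i<k. cnj (v $ i) * (\<Sum>j<m. X $$ (i,j) * w $ j))"
      unfolding Xw
        using X v w
        by (intro sum.cong) (auto simp: index_mult_mat_vec_sum[of X k m] simp del: index_mult_mat_vec)
    also have "\<dots> = (\<Sum>j<m. w $ j * cnj (\<Sum>i<k. cnj (X $$ (i,j)) * v $ i))"
      by (simp add: sum_distrib_left sum_distrib_right mult_ac) (rule sum.swap)
    also have "\<dots> = (\<Sum>j<m. complex_of_real ((cmod (w $ j))^2))"
    proof (intro sum.cong refl)
      fix j assume j: "j \<in> {..<m}"
      have "(\<Sum>i<k. cnj (X $$ (i,j)) * v $ i) = w $ j"
        using X v j index_mult_mat_vec_sum[of "adj X" m k v j] by (simp add: w_def)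
      thus "w $ j * cnj (\<Sum>i<k. cnj (X $$ (i,j)) * v $ i) = complex_of_real ((cmod (w $ j))^2)"
        by (metis complex_norm_square)
    qed
    finally show ?thesis by (simp flip: of_real_sum add: sum_nonneg)
  qed
  thus ?thesis unfolding psd_def using XX h by auto
qed

lemma psd_smult:
  assumes "psd n M" "c \<ge> 0"
  shows "psd n (complex_of_real c \<cdot>\<^sub>m M)"
proof -
  have M: "M \<in> carrier_mat n n" using assms unfolding psd_def by auto
  have "adj (complex_of_real c \<cdot>\<^sub>m M) = complex_of_real c \<cdot>\<^sub>m adj M"
    by (intro eq_matI) auto
  moreover have "0 \<le> Re (\<Sum>i<n. cnj (v $ i) * ((complex_of_real c \<cdot>\<^sub>m M) *\<^sub>v v) $ i)" if v: "v \<in> carrier_vec n" for v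
  proof -
    have "(\<Sum>i<n. cnj (v $ i) * ((complex_of_real c \<cdot>\<^sub>m M) *\<^sub>v v) $ i) = complex_of_real c * (\<Sum>i<n. cnj (v $ i) * (M *\<^sub>v v) $ i)"
      using M v by (simp add: sum_distrib_left mult_ac scalar_prod_def sum_distrib_left)
    moreover have "0 \<le> Re (\<Sum>i<n. cnj (v $ i) * (M *\<^sub>v v) $ i)"
      using assms v unfolding psd_def by auto
    ultimately show ?thesis using assms by simp
  qed
  ultimately show ?thesis using assms M unfolding psd_def by auto
qed

lemma mult_cnj_self: "z * cnj z = (complex_of_real (cmod z))^2" "cnj z * z = (complex_of_real (cmod z))^2"
  using complex_norm_square[of z] by (simp_all add: mult.commute)

lemma smult_mat_mult_vec:
  fixes A :: "complex mat"
  assumes "A \<in> carrier_mat n m" "v \<in> carrier_vec m"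
  shows "(c \<cdot>\<^sub>m A) *\<^sub>v v = c \<cdot>\<^sub>v (A *\<^sub>v v)"
  using assms by (intro eq_vecI) (auto simp: scalar_prod_def sum_distrib_left mult.assoc)

lemma mat_pow_smult:
  assumes pM: "psd m M" and c: "c \<ge> 0"
  shows "mat_pow m (complex_of_real c \<cdot>\<^sub>m M) a = complex_of_real (c powr a) \<cdot>\<^sub>m mat_pow m M a"
  unfolding mat_pow_def
proof (rule mat_fun_eqI)
  have hM: "hermitian m M" using psd_hermitian[OF pM] .
  have M: "M \<in> carrier_mat m m" using hM unfolding hermitian_def by auto
  show "hermitian m (complex_of_real c \<cdot>\<^sub>m M)"
    using psd_hermitian[OF psd_smult[OF pM c]] .
  have F: "mat_fun m (\<lambda>x. x powr a) M \<in> carrier_mat m m" using mat_fun_carrier[OF hM] .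
  show "complex_of_real (c powr a) \<cdot>\<^sub>m mat_fun m (\<lambda>x. x powr a) M \<in> carrier_mat m m"
    using F by simp
  fix v \<mu> assume ev: "eigenpair m (complex_of_real c \<cdot>\<^sub>m M) v \<mu>"
  hence v: "v \<in> carrier_vec m" and v0: "v \<noteq> 0\<^sub>v m"
    and e: "complex_of_real c \<cdot>\<^sub>v (M *\<^sub>v v) = complex_of_real \<mu> \<cdot>\<^sub>v v"
    unfolding eigenpair_def using smult_mat_mult_vec[OF M] by auto
  show "(complex_of_real (c powr a) \<cdot>\<^sub>m mat_fun m (\<lambda>x. x powr a) M) *\<^sub>v v = complex_of_real (on_support (\<lambda>x. x powr a) \<mu>) \<cdot>\<^sub>v v"
  proof (cases "c = 0")
    case True
    obtain i where i: "i < m" "v $ i \<noteq> 0" using nonzero_vec_index[OF v v0] by blast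
    have "(complex_of_real c \<cdot>\<^sub>v (M *\<^sub>v v)) $ i = (complex_of_real \<mu> \<cdot>\<^sub>v v) $ i"
      using e by simp
    hence "complex_of_real \<mu> * v $ i = 0" using True i M v by simp
    hence "\<mu> = 0" using i by simp
    thus ?thesis using True F v by (auto simp: smult_mat_mult_vec on_support_def intro!: eq_vecI)
  next
    case False
    hence cp: "c > 0" using c by simp
    have Mv: "M *\<^sub>v v = complex_of_real (\<mu> / c) \<cdot>\<^sub>v v"
    proof -
      have "M *\<^sub>v v = (1 / complex_of_real c) \<cdot>\<^sub>v (complex_of_real c \<cdot>\<^sub>v (M *\<^sub>v v))"
        using cp by (simp add: smult_smult_assoc)
      also have "\<dots> = complex_of_real (\<mu> / c) \<cdot>\<^sub>v v"
        unfolding e by (simp add: smult_smult_assoc)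
      finally show ?thesis .
    qed
    have nn: "\<mu> / c \<ge> 0"
      using psd_eigenvalue_nonneg[OF pM] Mv v v0 unfolding eigenpair_def by auto
    have "(complex_of_real (c powr a) \<cdot>\<^sub>m mat_fun m (\<lambda>x. x powr a) M) *\<^sub>v v
        = complex_of_real (c powr a) \<cdot>\<^sub>v (complex_of_real (on_support (\<lambda>x. x powr a) (\<mu> / c)) \<cdot>\<^sub>v v)"
      using smult_mat_mult_vec[OF F v] mat_fun_mult_eigenvector[OF hM v Mv] by simp
    also have "\<dots> = complex_of_real (c powr a * on_support (\<lambda>x. x powr a) (\<mu> / c)) \<cdot>\<^sub>v v"
      by (simp add: smult_smult_assoc)
    also have "c powr a * on_support (\<lambda>x. x powr a) (\<mu> / c) = on_support (\<lambda>x. x powr a) \<mu>"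
      using cp nn by (auto simp: on_support_def powr_divide)
    finally show ?thesis .
  qed
qed

definition outer_prod :: "nat \<Rightarrow> complex vec \<Rightarrow> complex mat" where
  "outer_prod D \<psi> = mat D D (\<lambda>(k,l). \<psi> $ k * cnj (\<psi> $ l))"

lemma outer_prod_eq_mult_adj: "\<psi> \<in> carrier_vec D \<Longrightarrow> outer_prod D \<psi> = mat D 1 (\<lambda>(k,_). \<psi> $ k) * adj (mat D 1 (\<lambda>(k,_). \<psi> $ k))"
  by (intro eq_matI) (auto simp: outer_prod_def scalar_prod_def)

lemma psd_outer_prod: "\<psi> \<in> carrier_vec D \<Longrightarrow> psd D (outer_prod D \<psi>)"
  using outer_prod_eq_mult_adj psd_mult_adj[of "mat D 1 (\<lambda>(k,_). \<psi> $ k)" D 1] by simp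

lemma outer_prod_mult_vec:
  assumes "\<psi> \<in> carrier_vec D" "v \<in> carrier_vec D"
  shows "outer_prod D \<psi> *\<^sub>v v = (\<Sum>l<D. cnj (\<psi> $ l) * v $ l) \<cdot>\<^sub>v \<psi>"
  using assms
    by (intro eq_vecI) (auto simp: outer_prod_def scalar_prod_def sum_distrib_left lessThan_atLeast0 mult_ac)

lemma mat_pow_outer_prod:
  assumes psi: "\<psi> \<in> carrier_vec D" and nrm: "(\<Sum>i<D. cmod (\<psi> $ i) ^ 2) = 1"
  shows "mat_pow D (outer_prod D \<psi>) a = outer_prod D \<psi>"
  unfolding mat_pow_def
proof (rule mat_fun_eqI)
  show "hermitian D (outer_prod D \<psi>)" using psd_hermitian[OF psd_outer_prod[OF psi]] .
  show "outer_prod D \<psi> \<in> carrier_mat D D" by (simp add: outer_prod_def)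
  fix v \<mu> assume ev: "eigenpair D (outer_prod D \<psi>) v \<mu>"
  hence v: "v \<in> carrier_vec D" and v0: "v \<noteq> 0\<^sub>v D"
    and e: "outer_prod D \<psi> *\<^sub>v v = complex_of_real \<mu> \<cdot>\<^sub>v v"
      unfolding eigenpair_def by auto
  define c where "c = (\<Sum>l<D. cnj (\<psi> $ l) * v $ l)"
  have e2: "c \<cdot>\<^sub>v \<psi> = complex_of_real \<mu> \<cdot>\<^sub>v v"
    using e outer_prod_mult_vec[OF psi v] c_def by simp
  show "outer_prod D \<psi> *\<^sub>v v = complex_of_real (on_support (\<lambda>x. x powr a) \<mu>) \<cdot>\<^sub>v v"
  proof (cases "\<mu> = 0")
    case True thus ?thesis using e by (simp add: on_support_def)
  next
    case False
    have "(\<Sum>k<D. cnj (\<psi> $ k) * (c \<cdot>\<^sub>v \<psi>) $ k) = c * (\<Sum>k<D. complex_of_real ((cmod (\<psi> $ k))^2))"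
      using psi by (auto simp: sum_distrib_left mult_cnj_self mult_ac intro!: sum.cong)
    also have "\<dots> = c" using arg_cong[OF nrm, of complex_of_real] by (simp add: of_real_sum)
    finally have l: "(\<Sum>k<D. cnj (\<psi> $ k) * (c \<cdot>\<^sub>v \<psi>) $ k) = c" .
    have "(\<Sum>k<D. cnj (\<psi> $ k) * (complex_of_real \<mu> \<cdot>\<^sub>v v) $ k) = complex_of_real \<mu> * c"
      using v by (auto simp: c_def sum_distrib_left mult_ac intro!: sum.cong)
    hence "c = complex_of_real \<mu> * c" using l e2 by simp
    moreover have "c \<noteq> 0"
    proof
      assume "c = 0"
      obtain i where i: "i < D" "v $ i \<noteq> 0" using nonzero_vec_index[OF v v0] by blast
      have "(c \<cdot>\<^sub>v \<psi>) $ i = (complex_of_real \<mu> \<cdot>\<^sub>v v) $ i"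
        using e2 by simp
      hence "complex_of_real \<mu> * v $ i = 0" using \<open>c = 0\<close> i psi v by simp
      thus False using i False by simp
    qed
    ultimately have "\<mu> = 1" by simp
    thus ?thesis using e by (simp add: on_support_def)
  qed
qed

lemma hermitian_1x1: "hermitian 1 (mat 1 1 (\<lambda>_. complex_of_real c))"
  unfolding hermitian_def by (auto intro!: eq_matI)

lemma mat_fun_1x1:
  "mat_fun 1 f (mat 1 1 (\<lambda>_. complex_of_real c)) = mat 1 1 (\<lambda>_. complex_of_real (on_support f c))"
proof (rule mat_fun_eqI)
  show "hermitian 1 (mat 1 1 (\<lambda>_. complex_of_real c))"
    by (rule hermitian_1x1)
  show "mat 1 1 (\<lambda>_. complex_of_real (on_support f c)) \<in> carrier_mat 1 1"
    by simp
  fix v \<mu> assume "eigenpair 1 (mat 1 1 (\<lambda>_. complex_of_real c)) v \<mu>"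
  then have v: "v \<in> carrier_vec 1" and v0: "v \<noteq> 0\<^sub>v 1"
    and e: "mat 1 1 (\<lambda>_. complex_of_real c) *\<^sub>v v = complex_of_real \<mu> \<cdot>\<^sub>v v"
    unfolding eigenpair_def by auto
  have "v $ 0 \<noteq> 0"
    using nonzero_vec_index[OF v v0] by auto
  moreover have "complex_of_real c * v $ 0 = complex_of_real \<mu> * v $ 0"
    using arg_cong[OF e, of "\<lambda>x. x $ 0"] v by (simp add: scalar_prod_def)
  ultimately have "c = \<mu>" by simp
  then show "mat 1 1 (\<lambda>_. complex_of_real (on_support f c)) *\<^sub>v v = complex_of_real (on_support f \<mu>) \<cdot>\<^sub>v v"
    using v by (intro eq_vecI) (auto simp: scalar_prod_def)
qed

text \<open>Both \<open>f(Y\<^sup>* Y)\<close> and \<open>f(Y Y\<^sup>*)\<close> factor through \<open>g(Y Y\<^sup>*)\<close> with \<open>g x = f x / x\<close>; the factors then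
  commute under the trace.\<close>

lemma mat_fun_adj_mult_self:
  assumes Y: "Y \<in> carrier_mat k m"
  shows "mat_fun m f (adj Y * Y) = adj Y * mat_fun k (\<lambda>x. f x / x) (Y * adj Y) * Y"
proof (rule mat_fun_eqI)
  have hYY: "hermitian k (Y * adj Y)" using psd_hermitian[OF psd_mult_adj[OF Y]] .
  define G where "G = mat_fun k (\<lambda>x. f x / x) (Y * adj Y)"
  have G: "G \<in> carrier_mat k k" using mat_fun_carrier[OF hYY] G_def by simp
  show "hermitian m (adj Y * Y)"
    using psd_hermitian[OF psd_mult_adj[OF adj_carrier[OF Y]]] by simp
  show "adj Y * G * Y \<in> carrier_mat m m"
    using Y G by (meson adj_carrier mult_carrier_mat)
  fix v \<mu> assume "eigenpair m (adj Y * Y) v \<mu>"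
  then have v: "v \<in> carrier_vec m" and e: "(adj Y * Y) *\<^sub>v v = complex_of_real \<mu> \<cdot>\<^sub>v v"
    unfolding eigenpair_def by auto
  define u where "u = Y *\<^sub>v v"
  have u: "u \<in> carrier_vec k" using Y v u_def by simp
  have e0: "adj Y *\<^sub>v u = complex_of_real \<mu> \<cdot>\<^sub>v v"
    using e assoc_mult_mat_vec[OF adj_carrier[OF Y] Y v] u_def by simp
  have "(Y * adj Y) *\<^sub>v u = Y *\<^sub>v (adj Y *\<^sub>v u)"
    using assoc_mult_mat_vec[OF Y adj_carrier[OF Y] u] .
  also have "\<dots> = complex_of_real \<mu> \<cdot>\<^sub>v u"
    unfolding e0 using mult_mat_vec[OF Y v] u_def by simp
  finally have Gu: "G *\<^sub>v u = complex_of_real (on_support (\<lambda>x. f x / x) \<mu>) \<cdot>\<^sub>v u"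
    using mat_fun_mult_eigenvector[OF hYY u] G_def by simp
  have "(adj Y * G * Y) *\<^sub>v v = adj Y *\<^sub>v (G *\<^sub>v u)"
    using assoc_mult_mat_vec[OF mult_carrier_mat[OF adj_carrier[OF Y] G] Y v]
      assoc_mult_mat_vec[OF adj_carrier[OF Y] G u] u_def by simp
  also have "\<dots> = complex_of_real (on_support (\<lambda>x. f x / x) \<mu> * \<mu>) \<cdot>\<^sub>v v"
    unfolding Gu mult_mat_vec[OF adj_carrier[OF Y] u] e0 by (simp add: smult_smult_assoc)
  also have "on_support (\<lambda>x. f x / x) \<mu> * \<mu> = on_support f \<mu>"
    by (simp add: on_support_def)
  finally show "(adj Y * G * Y) *\<^sub>v v = complex_of_real (on_support f \<mu>) \<cdot>\<^sub>v v" .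
qed

lemma mat_fun_mult_adj_self:
  assumes Y: "Y \<in> carrier_mat k m"
  shows "mat_fun k f (Y * adj Y) = mat_fun k (\<lambda>x. f x / x) (Y * adj Y) * (Y * adj Y)"
proof (rule mat_fun_eqI)
  show hYY: "hermitian k (Y * adj Y)" using psd_hermitian[OF psd_mult_adj[OF Y]] .
  define G where "G = mat_fun k (\<lambda>x. f x / x) (Y * adj Y)"
  have G: "G \<in> carrier_mat k k" using mat_fun_carrier[OF hYY] G_def by simp
  have YY: "Y * adj Y \<in> carrier_mat k k" using hYY by (rule hermitian_carrier)
  show "G * (Y * adj Y) \<in> carrier_mat k k" using G YY by (rule mult_carrier_mat)
  fix v \<mu> assume "eigenpair k (Y * adj Y) v \<mu>"
  then have v: "v \<in> carrier_vec k" and e: "(Y * adj Y) *\<^sub>v v = complex_of_real \<mu> \<cdot>\<^sub>v v"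
    unfolding eigenpair_def by auto
  have "(G * (Y * adj Y)) *\<^sub>v v = G *\<^sub>v (complex_of_real \<mu> \<cdot>\<^sub>v v)"
    using assoc_mult_mat_vec[OF G YY v] e by simp
  also have "\<dots> = complex_of_real \<mu> \<cdot>\<^sub>v (complex_of_real (on_support (\<lambda>x. f x / x) \<mu>) \<cdot>\<^sub>v v)"
    using mult_mat_vec[OF G v] mat_fun_mult_eigenvector[OF hYY v e] G_def by simp
  also have "\<dots> = complex_of_real (on_support f \<mu>) \<cdot>\<^sub>v v"
    by (simp add: smult_smult_assoc on_support_def)
  finally show "(G * (Y * adj Y)) *\<^sub>v v = complex_of_real (on_support f \<mu>) \<cdot>\<^sub>v v" .
qed

lemma mtrace_mat_fun_adj_mult_comm:
  assumes Y: "Y \<in> carrier_mat k m"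
  shows "mtrace (mat_fun m f (adj Y * Y)) = mtrace (mat_fun k f (Y * adj Y))"
proof -
  define G where "G = mat_fun k (\<lambda>x. f x / x) (Y * adj Y)"
  have G: "G \<in> carrier_mat k k"
    unfolding G_def by (rule mat_fun_carrier[OF psd_hermitian[OF psd_mult_adj[OF Y]]])
  have "mtrace (adj Y * G * Y) = mtrace (adj Y * (G * Y))"
    using assoc_mult_mat[OF adj_carrier[OF Y] G Y] by simp
  also have "\<dots> = mtrace ((G * Y) * adj Y)"
    using mtrace_mult_comm[OF mult_carrier_mat[OF G Y] adj_carrier[OF Y]] by simp
  also have "\<dots> = mtrace (G * (Y * adj Y))"
    using assoc_mult_mat[OF G Y adj_carrier[OF Y]] by simp
  finally show ?thesis
    unfolding mat_fun_adj_mult_self[OF Y, where f = f] mat_fun_mult_adj_self[OF Y, where f = f] G_def .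
qed

lemma mat_pow_mat_pow:
  assumes p: "psd m \<sigma>"
  shows "mat_pow m (mat_pow m \<sigma> a) b = mat_pow m \<sigma> (a * b)"
proof -
  have h: "hermitian m \<sigma>" using psd_hermitian[OF p] .
  have h2: "hermitian m (mat_pow m \<sigma> a)"
    unfolding mat_pow_def using hermitian_mat_fun[OF h] .
  show ?thesis unfolding mat_pow_def[of m \<sigma> "a*b"]
  proof (rule mat_fun_eqI[OF h, symmetric])
    show "mat_pow m (mat_pow m \<sigma> a) b \<in> carrier_mat m m"
      unfolding mat_pow_def[of m "mat_pow m \<sigma> a"] using mat_fun_carrier[OF h2] .
    fix v \<mu> assume ev: "eigenpair m \<sigma> v \<mu>"
    hence v: "v \<in> carrier_vec m" and e: "\<sigma> *\<^sub>v v = complex_of_real \<mu> \<cdot>\<^sub>v v"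
      unfolding eigenpair_def by auto
    have nn: "\<mu> \<ge> 0" using psd_eigenvalue_nonneg[OF p ev] .
    have e1: "mat_pow m \<sigma> a *\<^sub>v v = complex_of_real (on_support (\<lambda>x. x powr a) \<mu>) \<cdot>\<^sub>v v"
      unfolding mat_pow_def using mat_fun_mult_eigenvector[OF h v e] .
    have "mat_pow m (mat_pow m \<sigma> a) b *\<^sub>v v = complex_of_real (on_support (\<lambda>x. x powr b) (on_support (\<lambda>x. x powr a) \<mu>)) \<cdot>\<^sub>v v"
      unfolding mat_pow_def[of m "mat_pow m \<sigma> a"]
        using mat_fun_mult_eigenvector[OF h2 v e1] .
    also have "on_support (\<lambda>x. x powr b) (on_support (\<lambda>x. x powr a) \<mu>) = on_support (\<lambda>x. x powr (a * b)) \<mu>"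
      using nn by (auto simp: on_support_def powr_powr)
    finally show "mat_pow m (mat_pow m \<sigma> a) b *\<^sub>v v = complex_of_real (on_support (\<lambda>x. x powr (a * b)) \<mu>) \<cdot>\<^sub>v v" .
  qed
qed

lemma mat_pow_sandwich:
  assumes p: "psd m \<sigma>"
  shows "mat_pow m \<sigma> s * \<sigma> * mat_pow m \<sigma> s = mat_pow m \<sigma> (2 * s + 1)"
proof -
  have h: "hermitian m \<sigma>" using psd_hermitian[OF p] .
  have S: "mat_pow m \<sigma> s \<in> carrier_mat m m"
    unfolding mat_pow_def using mat_fun_carrier[OF h] .
  have sg: "\<sigma> \<in> carrier_mat m m" using h unfolding hermitian_def by auto
  show ?thesis unfolding mat_pow_def[of m \<sigma> "2*s+1"]
  proof (rule mat_fun_eqI[OF h, symmetric])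
    show "mat_pow m \<sigma> s * \<sigma> * mat_pow m \<sigma> s \<in> carrier_mat m m"
      using mult_carrier_mat[OF mult_carrier_mat[OF S sg] S] .
    fix v \<mu> assume ev: "eigenpair m \<sigma> v \<mu>"
    hence v: "v \<in> carrier_vec m" and e: "\<sigma> *\<^sub>v v = complex_of_real \<mu> \<cdot>\<^sub>v v"
      unfolding eigenpair_def by auto
    have nn: "\<mu> \<ge> 0" using psd_eigenvalue_nonneg[OF p ev] .
    have e1: "mat_pow m \<sigma> s *\<^sub>v v = complex_of_real (on_support (\<lambda>x. x powr s) \<mu>) \<cdot>\<^sub>v v"
      unfolding mat_pow_def using mat_fun_mult_eigenvector[OF h v e] .
    have "(mat_pow m \<sigma> s * \<sigma> * mat_pow m \<sigma> s) *\<^sub>v v = mat_pow m \<sigma> s *\<^sub>v (\<sigma> *\<^sub>v (mat_pow m \<sigma> s *\<^sub>v v))"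
      using assoc_mult_mat3_vec[OF S sg S v] .
    also have "\<sigma> *\<^sub>v (mat_pow m \<sigma> s *\<^sub>v v) = complex_of_real (on_support (\<lambda>x. x powr s) \<mu> * \<mu>) \<cdot>\<^sub>v v"
      unfolding e1 mult_mat_vec[OF sg v] e smult_smult_assoc by simp
    also have "mat_pow m \<sigma> s *\<^sub>v (complex_of_real (on_support (\<lambda>x. x powr s) \<mu> * \<mu>) \<cdot>\<^sub>v v)
       = complex_of_real (on_support (\<lambda>x. x powr s) \<mu> * \<mu> * on_support (\<lambda>x. x powr s) \<mu>) \<cdot>\<^sub>v v"
      unfolding mult_mat_vec[OF S v] e1 smult_smult_assoc by simp
    also have "on_support (\<lambda>x. x powr s) \<mu> * \<mu> * on_support (\<lambda>x. x powr s) \<mu> = on_support (\<lambda>x. x powr (2 * s + 1)) \<mu>"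
    proof (cases "\<mu> = 0")
      case False
      hence mp: "\<mu> > 0" using nn by simp
      have "\<mu> powr (2 * s + 1) = \<mu> powr (s + s + 1)"
        by (rule arg_cong[where f="\<lambda>t. \<mu> powr t"]) simp
      also have "\<dots> = \<mu> powr s * \<mu> powr s * \<mu> powr 1" by (simp only: powr_add)
      also have "\<mu> powr 1 = \<mu>" using mp by simp
      finally have "\<mu> powr s * \<mu> powr s * \<mu> = \<mu> powr (2 * s + 1)" by simp
      thus ?thesis
        using False unfolding on_support_def by (simp add: mult.commute mult.left_commute)
    qed (simp add: on_support_def)
    finally show "(mat_pow m \<sigma> s * \<sigma> * mat_pow m \<sigma> s) *\<^sub>v v = complex_of_real (on_support (\<lambda>x. x powr (2 * s + 1)) \<mu>) \<cdot>\<^sub>v v" .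
  qed
qed

section \<open>Block-diagonal operators and partial traces\<close>

definition coeff_mat :: "nat \<Rightarrow> nat \<Rightarrow> complex vec \<Rightarrow> complex mat" where
  "coeff_mat a b \<psi> = mat a b (\<lambda>(i,j). \<psi> $ (i*b + j))"

lemma coeff_mat_carrier [simp]: "coeff_mat a b \<psi> \<in> carrier_mat a b"
  by (simp add: coeff_mat_def)

lemma coeff_mat_dims [simp]: "dim_row (coeff_mat a b \<psi>) = a" "dim_col (coeff_mat a b \<psi>) = b"
  by (simp_all add: coeff_mat_def)

lemma index_coeff_mat [simp]: "i < a \<Longrightarrow> j < b \<Longrightarrow> coeff_mat a b \<psi> $$ (i,j) = \<psi> $ (i*b + j)"
  by (simp add: coeff_mat_def)

lemma map_mat_cnj_mult_adj: "map_mat cnj (C * adj C) = map_mat cnj C * adj (map_mat cnj C)"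
  by (rule eq_matI) (auto simp: scalar_prod_def)

lemma div_mod_mult_add:
  assumes "r < (D::nat)"
  shows "(x*D + r) div D = x" "(x*D + r) mod D = r"
  using assms by auto

lemma div_less_of_less_mult: "i < m * n \<Longrightarrow> i div n < (m::nat)"
  by (cases "n = 0") (auto simp: div_less_iff_less_mult)

lemma mod_less_of_less_mult: "i < m * n \<Longrightarrow> i mod n < (n::nat)"
  by (cases "n = 0") auto

lemma mult_add_less_mult: "k < m \<Longrightarrow> y < (n::nat) \<Longrightarrow> k*n + y < m*n"
proof -
  assume k: "k < m" and y: "y < n"
  have "k*n + y < Suc k * n" using y by simp
  also have "\<dots> \<le> m * n" using k by (intro mult_le_mono1) simp
  finally show ?thesis .
qed

lemma sum_lessThan_mult:
  fixes f :: "nat \<Rightarrow> 'a::comm_monoid_add"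
  shows "(\<Sum>i<m*n. f i) = (\<Sum>k<m. \<Sum>x<n. f (k*n + x))"
proof -
  have "(\<Sum>i<m*n. f i) = (\<Sum>k<m. sum f {k * n ..< k * n + n})"
    using sum.nat_group[of f n m] by simp
  also have "\<dots> = (\<Sum>k<m. \<Sum>x<n. f (k*n + x))"
  proof (rule sum.cong[OF refl])
    fix k
    have "sum f {k * n ..< k * n + n} = (\<Sum>x = 0..<n. f (x + k * n))"
      using sum.shift_bounds_nat_ivl[of f 0 "k*n" n] by (simp add: add.commute)
    thus "sum f {k * n ..< k * n + n} = (\<Sum>x<n. f (k*n + x))"
      by (simp add: lessThan_atLeast0 add.commute)
  qed
  finally show ?thesis .
qed

text \<open>\<open>diag_blocks m n M = \<Sum>\<^sub>x M x \<otimes> |x\<rangle>\<langle>x|\<close>, the classical register being the last tensor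
  factor (row index \<open>k * n + x\<close>); \<open>kron_id a b X = X \<otimes> 1\<^sub>b\<close>.\<close>

definition diag_blocks :: "nat \<Rightarrow> nat \<Rightarrow> (nat \<Rightarrow> complex mat) \<Rightarrow> complex mat" where
  "diag_blocks m n M = mat (m*n) (m*n) (\<lambda>(i,j). if i mod n = j mod n then M (i mod n) $$ (i div n, j div n) else 0)"

definition kron_id :: "nat \<Rightarrow> nat \<Rightarrow> complex mat \<Rightarrow> complex mat" where
  "kron_id a b X = mat (a*b) (a*b) (\<lambda>(k,l). if k mod b = l mod b then X $$ (k div b, l div b) else 0)"

lemma diag_blocks_carrier [simp]: "diag_blocks m n M \<in> carrier_mat (m*n) (m*n)"
  by (simp add: diag_blocks_def)

lemma diag_blocks_dims [simp]: "dim_row (diag_blocks m n M) = m*n" "dim_col (diag_blocks m n M) = m*n"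
  by (auto simp: diag_blocks_def)

lemma index_diag_blocks: "i < m*n \<Longrightarrow> j < m*n \<Longrightarrow>
   diag_blocks m n M $$ (i,j) = (if i mod n = j mod n then M (i mod n) $$ (i div n, j div n) else 0)"
  by (simp add: diag_blocks_def)

lemma kron_id_carrier [simp]: "kron_id a b X \<in> carrier_mat (a*b) (a*b)"
  by (simp add: kron_id_def)

lemma adj_diag_blocks:
  assumes "\<And>x. x < n \<Longrightarrow> M x \<in> carrier_mat m m"
  shows "adj (diag_blocks m n M) = diag_blocks m n (\<lambda>x. adj (M x))"
proof (rule eq_matI)
  fix i j assume "i < dim_row (diag_blocks m n (\<lambda>x. adj (M x)))" "j < dim_col (diag_blocks m n (\<lambda>x. adj (M x)))"
  hence i: "i < m*n" and j: "j < m*n" by auto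
  show "adj (diag_blocks m n M) $$ (i,j) = diag_blocks m n (\<lambda>x. adj (M x)) $$ (i,j)"
    using i j assms[OF mod_less_of_less_mult[OF i]] div_less_of_less_mult[OF i] div_less_of_less_mult[OF j]
      by (auto simp: index_diag_blocks)
qed auto

lemma hermitian_diag_blocks:
  assumes "\<And>x. x < n \<Longrightarrow> hermitian m (M x)"
  shows "hermitian (m*n) (diag_blocks m n M)"
proof -
  have c: "\<And>x. x < n \<Longrightarrow> M x \<in> carrier_mat m m"
    using assms unfolding hermitian_def by auto
  have "diag_blocks m n (\<lambda>x. adj (M x)) = diag_blocks m n M"
    using assms
      unfolding hermitian_def
      by (intro eq_matI) (auto simp: index_diag_blocks mod_less_of_less_mult)
  thus ?thesis using adj_diag_blocks[OF c] unfolding hermitian_def by simp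
qed

lemma diag_blocks_mult:
  assumes "\<And>x. x < n \<Longrightarrow> M x \<in> carrier_mat m m" "\<And>x. x < n \<Longrightarrow> N x \<in> carrier_mat m m"
  shows "diag_blocks m n M * diag_blocks m n N = diag_blocks m n (\<lambda>x. M x * N x)"
proof (rule eq_matI)
  fix i j assume "i < dim_row (diag_blocks m n (\<lambda>x. M x * N x))" "j < dim_col (diag_blocks m n (\<lambda>x. M x * N x))"
  hence i: "i < m*n" and j: "j < m*n" by auto
  have nn: "i mod n < n" "i div n < m" "j div n < m"
    using mod_less_of_less_mult[OF i] div_less_of_less_mult[OF i] div_less_of_less_mult[OF j] .
  have "(diag_blocks m n M * diag_blocks m n N) $$ (i,j) = (\<Sum>l<m*n. diag_blocks m n M $$ (i,l) * diag_blocks m n N $$ (l,j))"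
    using i j by (simp add: scalar_prod_def lessThan_atLeast0)
  also have "\<dots> = (\<Sum>k<m. \<Sum>y<n. diag_blocks m n M $$ (i,k*n+y) * diag_blocks m n N $$ (k*n+y,j))"
    by (rule sum_lessThan_mult)
  also have "\<dots> = (\<Sum>k<m. \<Sum>y<n. if y = i mod n then (if i mod n = j mod n then M (i mod n) $$ (i div n, k) * N (i mod n) $$ (k, j div n) else 0) else 0)"
  proof (intro sum.cong refl)
    fix k y assume k: "k \<in> {..<m}" and y: "y \<in> {..<n}"
    have ky: "k*n + y < m*n" using k y mult_add_less_mult by simp
    show "diag_blocks m n M $$ (i,k*n+y) * diag_blocks m n N $$ (k*n+y,j) = (if y = i mod n then (if i mod n = j mod n then M (i mod n) $$ (i div n, k) * N (i mod n) $$ (k, j div n) else 0) else 0)"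
      using i j ky y by (auto simp: index_diag_blocks)
  qed
  also have "\<dots> = (if i mod n = j mod n then \<Sum>k<m. M (i mod n) $$ (i div n, k) * N (i mod n) $$ (k, j div n) else 0)"
    using nn by (simp add: sum.delta')
  also have "\<dots> = diag_blocks m n (\<lambda>x. M x * N x) $$ (i,j)"
    using i j nn assms[of "i mod n"] assms[of "j mod n"] mod_less_of_less_mult[OF j]
      by (simp add: index_diag_blocks scalar_prod_def lessThan_atLeast0)
  finally show "(diag_blocks m n M * diag_blocks m n N) $$ (i,j) = diag_blocks m n (\<lambda>x. M x * N x) $$ (i,j)" .
qed auto

lemma diag_blocks_cong: "(\<And>x. x < n \<Longrightarrow> M x = N x) \<Longrightarrow> diag_blocks m n M = diag_blocks m n N"
  by (intro eq_matI) (auto simp: index_diag_blocks mod_less_of_less_mult)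

lemma index_diag_blocks_mult_vec:
  assumes N: "\<And>x. x < n \<Longrightarrow> N x \<in> carrier_mat m m" and v: "v \<in> carrier_vec (m*n)"
  and x: "x < n" and k: "k < m"
  shows "(diag_blocks m n N *\<^sub>v v) $ (k*n+x) = (N x *\<^sub>v vec m (\<lambda>k. v $ (k*n + x))) $ k"
proof -
  have kx: "k*n + x < m*n" using mult_add_less_mult[OF k x] .
  have "(diag_blocks m n N *\<^sub>v v) $ (k*n+x) = (\<Sum>l<m*n. diag_blocks m n N $$ (k*n+x, l) * v $ l)"
    using index_mult_mat_vec_sum[OF diag_blocks_carrier v kx] .
  also have "\<dots> = (\<Sum>k'<m. \<Sum>y<n. diag_blocks m n N $$ (k*n+x, k'*n+y) * v $ (k'*n+y))"
    by (rule sum_lessThan_mult)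
  also have "\<dots> = (\<Sum>k'<m. \<Sum>y<n. if y = x then N x $$ (k, k') * v $ (k'*n+x) else 0)"
  proof (intro sum.cong refl)
    fix k' y assume k': "k' \<in> {..<m}" and y: "y \<in> {..<n}"
    have ky: "k'*n + y < m*n" using mult_add_less_mult k' y by simp
    show "diag_blocks m n N $$ (k*n+x, k'*n+y) * v $ (k'*n+y) = (if y = x then N x $$ (k, k') * v $ (k'*n+x) else 0)"
      using kx ky x y by (auto simp: index_diag_blocks)
  qed
  also have "\<dots> = (\<Sum>k'<m. N x $$ (k, k') * v $ (k'*n+x))"
    using x by (simp add: sum.delta')
  also have "\<dots> = (N x *\<^sub>v vec m (\<lambda>k. v $ (k*n + x))) $ k"
    using index_mult_mat_vec_sum[OF N[OF x] _ k, of "vec m (\<lambda>k. v $ (k*n + x))"] by simp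
  finally show ?thesis .
qed

lemma mat_fun_diag_blocks:
  assumes h: "\<And>x. x < n \<Longrightarrow> hermitian m (M x)"
  shows "mat_fun (m*n) f (diag_blocks m n M) = diag_blocks m n (\<lambda>x. mat_fun m f (M x))"
proof (rule mat_fun_eqI[OF hermitian_diag_blocks[OF h]])
  show "diag_blocks m n (\<lambda>x. mat_fun m f (M x)) \<in> carrier_mat (m * n) (m * n)" by simp
  have Mc: "\<And>x. x < n \<Longrightarrow> M x \<in> carrier_mat m m"
    using h unfolding hermitian_def by auto
  have Fc: "\<And>x. x < n \<Longrightarrow> mat_fun m f (M x) \<in> carrier_mat m m"
    using mat_fun_carrier h by blast
  fix v \<mu> assume ev: "eigenpair (m*n) (diag_blocks m n M) v \<mu>"
  hence v: "v \<in> carrier_vec (m*n)" and e: "diag_blocks m n M *\<^sub>v v = complex_of_real \<mu> \<cdot>\<^sub>v v"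
    unfolding eigenpair_def by auto
  define cmp where "cmp x = vec m (\<lambda>k. v $ (k*n + x))" for x
  have cx: "M x *\<^sub>v cmp x = complex_of_real \<mu> \<cdot>\<^sub>v cmp x" if x: "x < n" for x
  proof (intro eq_vecI)
    fix k assume "k < dim_vec (complex_of_real \<mu> \<cdot>\<^sub>v cmp x)"
    hence k: "k < m" by (simp add: cmp_def)
    have "(M x *\<^sub>v cmp x) $ k = (diag_blocks m n M *\<^sub>v v) $ (k*n+x)"
      using index_diag_blocks_mult_vec[OF Mc v x k] cmp_def by simp
    also have "\<dots> = complex_of_real \<mu> * v $ (k*n+x)"
      unfolding e using v mult_add_less_mult[OF k x] by simp
    finally show "(M x *\<^sub>v cmp x) $ k = (complex_of_real \<mu> \<cdot>\<^sub>v cmp x) $ k"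
      using k by (simp add: cmp_def)
  qed (use Mc[OF x] in \<open>simp add: cmp_def\<close>)
  show "diag_blocks m n (\<lambda>x. mat_fun m f (M x)) *\<^sub>v v = complex_of_real (on_support f \<mu>) \<cdot>\<^sub>v v"
  proof (intro eq_vecI)
    fix i assume "i < dim_vec (complex_of_real (on_support f \<mu>) \<cdot>\<^sub>v v)"
    hence i: "i < m*n" using v by simp
    define k x where "k = i div n" and "x = i mod n"
    have k: "k < m" and x: "x < n"
      using div_less_of_less_mult[OF i] mod_less_of_less_mult[OF i] k_def x_def by auto
    have ieq: "i = k*n + x" using k_def x_def by simp
    have cmp_x: "cmp x \<in> carrier_vec m" by (simp add: cmp_def)
    have "(diag_blocks m n (\<lambda>x. mat_fun m f (M x)) *\<^sub>v v) $ i = (mat_fun m f (M x) *\<^sub>v cmp x) $ k"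
      unfolding ieq using index_diag_blocks_mult_vec[OF Fc v x k] cmp_def by simp
    also have "\<dots> = complex_of_real (on_support f \<mu>) * cmp x $ k"
      using mat_fun_mult_eigenvector[OF h[OF x] cmp_x cx[OF x]] k by (simp add: cmp_def)
    also have "\<dots> = (complex_of_real (on_support f \<mu>) \<cdot>\<^sub>v v) $ i"
      using v i k unfolding ieq by (simp add: cmp_def)
    finally show "(diag_blocks m n (\<lambda>x. mat_fun m f (M x)) *\<^sub>v v) $ i = (complex_of_real (on_support f \<mu>) \<cdot>\<^sub>v v) $ i" .
  qed (use v in simp)
qed

lemma mtrace_diag_blocks:
  assumes "\<And>x. x < n \<Longrightarrow> M x \<in> carrier_mat m m"
  shows "mtrace (diag_blocks m n M) = (\<Sum>x<n. mtrace (M x))"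
proof -
  have "mtrace (diag_blocks m n M) = (\<Sum>i<m*n. diag_blocks m n M $$ (i,i))"
    by (simp add: mtrace_def)
  also have "\<dots> = (\<Sum>k<m. \<Sum>x<n. diag_blocks m n M $$ (k*n+x,k*n+x))"
    by (rule sum_lessThan_mult)
  also have "\<dots> = (\<Sum>k<m. \<Sum>x<n. M x $$ (k,k))"
    by (intro sum.cong refl) (auto simp: index_diag_blocks mult_add_less_mult)
  also have "\<dots> = (\<Sum>x<n. \<Sum>k<m. M x $$ (k,k))" by (rule sum.swap)
  also have "\<dots> = (\<Sum>x<n. mtrace (M x))"
    using assms by (intro sum.cong refl) (auto simp: mtrace_def)
  finally show ?thesis .
qed

lemma ptrace_mid_diag_blocks: "ptrace_mid a b n (diag_blocks (a*b) n M) = diag_blocks a n (\<lambda>x. ptrace_mid a b 1 (M x))"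
proof (rule eq_matI)
  fix i j assume "i < dim_row (diag_blocks a n (\<lambda>x. ptrace_mid a b 1 (M x)))" "j < dim_col (diag_blocks a n (\<lambda>x. ptrace_mid a b 1 (M x)))"
  hence i: "i < a*n" and j: "j < a*n" by auto
  have mi: "i mod n < n" "j mod n < n" using mod_less_of_less_mult i j by auto
  have di: "i div n < a" "j div n < a" using div_less_of_less_mult i j by auto
  have "ptrace_mid a b n (diag_blocks (a*b) n M) $$ (i,j) =
     (\<Sum>k<b. diag_blocks (a*b) n M $$ (((i div n)*b + k)*n + i mod n, ((j div n)*b + k)*n + j mod n))"
    using i j by (simp add: ptrace_mid_def)
  also have "\<dots> = (\<Sum>k<b. if i mod n = j mod n then M (i mod n) $$ ((i div n)*b + k, (j div n)*b + k) else 0)"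
  proof (intro sum.cong refl)
    fix k assume k: "k \<in> {..<b}"
    have l1: "(i div n)*b + k < a*b" "(j div n)*b + k < a*b" using mult_add_less_mult di k by auto
    have l2: "((i div n)*b + k)*n + i mod n < a*b*n" "((j div n)*b + k)*n + j mod n < a*b*n"
      using mult_add_less_mult[OF l1(1) mi(1)] mult_add_less_mult[OF l1(2) mi(2)] by auto
    show "diag_blocks (a*b) n M $$ (((i div n)*b + k)*n + i mod n, ((j div n)*b + k)*n + j mod n) =
        (if i mod n = j mod n then M (i mod n) $$ ((i div n)*b + k, (j div n)*b + k) else 0)"
      using l2 mi by (simp add: index_diag_blocks)
  qed
  also have "\<dots> = diag_blocks a n (\<lambda>x. ptrace_mid a b 1 (M x)) $$ (i,j)"
    using i j di by (auto simp: index_diag_blocks ptrace_mid_def)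
  finally show "ptrace_mid a b n (diag_blocks (a*b) n M) $$ (i,j) = diag_blocks a n (\<lambda>x. ptrace_mid a b 1 (M x)) $$ (i,j)" .
qed (auto simp: ptrace_mid_def)

lemma ptrace_first_diag_blocks: "ptrace_mid 1 a (b*n) (diag_blocks (a*b) n M) = diag_blocks b n (\<lambda>x. ptrace_mid 1 a b (M x))"
proof (rule eq_matI)
  fix i j assume "i < dim_row (diag_blocks b n (\<lambda>x. ptrace_mid 1 a b (M x)))" "j < dim_col (diag_blocks b n (\<lambda>x. ptrace_mid 1 a b (M x)))"
  hence i: "i < b*n" and j: "j < b*n" by auto
  have mi: "i mod n < n" "j mod n < n" using mod_less_of_less_mult i j by auto
  have di: "i div n < b" "j div n < b" using div_less_of_less_mult i j by auto
  have "ptrace_mid 1 a (b*n) (diag_blocks (a*b) n M) $$ (i,j) = (\<Sum>k<a. diag_blocks (a*b) n M $$ (k*(b*n) + i, k*(b*n) + j))"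
    using i j by (simp add: ptrace_mid_def)
  also have "\<dots> = (\<Sum>k<a. if i mod n = j mod n then M (i mod n) $$ (k*b + i div n, k*b + j div n) else 0)"
  proof (intro sum.cong refl)
    fix k assume k: "k \<in> {..<a}"
    have e1: "k*(b*n) + i = (k*b + i div n)*n + i mod n" "k*(b*n) + j = (k*b + j div n)*n + j mod n"
      by (simp_all add: algebra_simps)
    have l1: "k*b + i div n < a*b" "k*b + j div n < a*b" using mult_add_less_mult di k by auto
    have l2: "(k*b + i div n)*n + i mod n < a*b*n" "(k*b + j div n)*n + j mod n < a*b*n"
      using mult_add_less_mult[OF l1(1) mi(1)] mult_add_less_mult[OF l1(2) mi(2)] by auto
    show "diag_blocks (a*b) n M $$ (k*(b*n) + i, k*(b*n) + j) = (if i mod n = j mod n then M (i mod n) $$ (k*b + i div n, k*b + j div n) else 0)"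
      unfolding e1 using l2 mi by (simp add: index_diag_blocks)
  qed
  also have "\<dots> = diag_blocks b n (\<lambda>x. ptrace_mid 1 a b (M x)) $$ (i,j)"
    using i j di by (auto simp: index_diag_blocks ptrace_mid_def)
  finally show "ptrace_mid 1 a (b*n) (diag_blocks (a*b) n M) $$ (i,j) = diag_blocks b n (\<lambda>x. ptrace_mid 1 a b (M x)) $$ (i,j)" .
qed (auto simp: ptrace_mid_def)

lemma id_mid_diag_blocks: "id_mid a b n (diag_blocks a n S) = diag_blocks (a*b) n (\<lambda>x. kron_id a b (S x))"
proof (rule eq_matI)
  fix i j assume "i < dim_row (diag_blocks (a*b) n (\<lambda>x. kron_id a b (S x)))" "j < dim_col (diag_blocks (a*b) n (\<lambda>x. kron_id a b (S x)))"
  hence i: "i < a*b*n" and j: "j < a*b*n" by auto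
  have mi: "i mod n < n" "j mod n < n" using mod_less_of_less_mult i j by auto
  have di: "i div n < a*b" "j div n < a*b" using div_less_of_less_mult i j by auto
  have dd: "i div (b*n) = i div n div b" "j div (b*n) = j div n div b"
    by (metis div_mult2_eq mult.commute)+
  have dl: "i div n div b < a" "j div n div b < a" using div_less_of_less_mult di by auto
  have u: "(i div (b*n))*n + i mod n < a*n" "(j div (b*n))*n + j mod n < a*n"
    unfolding dd using mult_add_less_mult dl mi by auto
  show "id_mid a b n (diag_blocks a n S) $$ (i,j) = diag_blocks (a*b) n (\<lambda>x. kron_id a b (S x)) $$ (i,j)"
    using i j u mi di unfolding id_mid_def by (auto simp: index_diag_blocks kron_id_def dd)
qed (auto simp: id_mid_def)

lemma hermitian_kron_id:
  assumes "hermitian a X"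
  shows "hermitian (a*b) (kron_id a b X)"
proof -
  have X: "X \<in> carrier_mat a a" and h: "adj X = X" using assms unfolding hermitian_def by auto
  have "adj (kron_id a b X) = kron_id a b X"
  proof (rule eq_matI)
    fix i j assume "i < dim_row (kron_id a b X)" "j < dim_col (kron_id a b X)"
    hence i: "i < a*b" and j: "j < a*b" by (auto simp: kron_id_def)
    have "cnj (X $$ (j div b, i div b)) = X $$ (i div b, j div b)"
      using div_less_of_less_mult[OF i] div_less_of_less_mult[OF j] X arg_cong[OF h, of "\<lambda>M. M $$ (i div b, j div b)"]
        by simp
    thus "adj (kron_id a b X) $$ (i,j) = kron_id a b X $$ (i,j)"
      using i j by (auto simp: kron_id_def)
  qed (auto simp: kron_id_def)
  thus ?thesis unfolding hermitian_def by simp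
qed

lemma mult_col_mat:
  assumes K: "K \<in> carrier_mat D D" and psi: "\<psi> \<in> carrier_vec D"
  shows "K * mat D 1 (\<lambda>(k,_). \<psi> $ k) = mat D 1 (\<lambda>(k,_). (K *\<^sub>v \<psi>) $ k)"
  using K psi by (intro eq_matI) (auto simp: scalar_prod_def)

lemma hermitian_sandwich_outer_prod:
  assumes hK: "hermitian D K" and psi: "\<psi> \<in> carrier_vec D"
  shows "K * outer_prod D \<psi> * K = outer_prod D (K *\<^sub>v \<psi>)"
proof -
  have K: "K \<in> carrier_mat D D" and h: "adj K = K" using hK unfolding hermitian_def by auto
  define C where "C = mat D 1 (\<lambda>(k,_). \<psi> $ k)"
  have C: "C \<in> carrier_mat D 1" by (simp add: C_def)
  have "K * outer_prod D \<psi> * K = K * (C * adj C) * K"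
    using outer_prod_eq_mult_adj[OF psi] C_def by simp
  also have "\<dots> = (K * C) * (adj C * K)"
    using assoc_mult_mat[OF K C adj_carrier[OF C], symmetric]
      assoc_mult_mat[OF mult_carrier_mat[OF K C] adj_carrier[OF C] K] by simp
  also have "adj C * K = adj (K * C)" using adj_mult[OF K C] h by simp
  also have "K * C = mat D 1 (\<lambda>(k,_). (K *\<^sub>v \<psi>) $ k)"
    using mult_col_mat[OF K psi] C_def by simp
  also have "\<dots> * adj \<dots> = outer_prod D (K *\<^sub>v \<psi>)"
    using outer_prod_eq_mult_adj[of "K *\<^sub>v \<psi>" D] K psi by simp
  finally show ?thesis .
qed

lemma ptrace_first_outer_prod:
  assumes phi: "\<phi> \<in> carrier_vec (a*b)"
  shows "ptrace_mid 1 a b (outer_prod (a*b) \<phi>) = adj (map_mat cnj (coeff_mat a b \<phi>)) * map_mat cnj (coeff_mat a b \<phi>)"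
proof (rule eq_matI)
  fix i j assume "i < dim_row (adj (map_mat cnj (coeff_mat a b \<phi>)) * map_mat cnj (coeff_mat a b \<phi>))"
    "j < dim_col (adj (map_mat cnj (coeff_mat a b \<phi>)) * map_mat cnj (coeff_mat a b \<phi>))"
  hence i: "i < b" and j: "j < b" by auto
  have "ptrace_mid 1 a b (outer_prod (a*b) \<phi>) $$ (i,j) = (\<Sum>k<a. outer_prod (a*b) \<phi> $$ (k*b + i, k*b + j))"
    using i j by (simp add: ptrace_mid_def)
  also have "\<dots> = (\<Sum>k<a. \<phi> $ (k*b + i) * cnj (\<phi> $ (k*b + j)))"
    using i j mult_add_less_mult by (intro sum.cong refl) (auto simp: outer_prod_def)
  also have "\<dots> = (adj (map_mat cnj (coeff_mat a b \<phi>)) * map_mat cnj (coeff_mat a b \<phi>)) $$ (i,j)"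
    using i j by (simp add: scalar_prod_def lessThan_atLeast0)
  finally show "ptrace_mid 1 a b (outer_prod (a*b) \<phi>) $$ (i,j) = (adj (map_mat cnj (coeff_mat a b \<phi>)) * map_mat cnj (coeff_mat a b \<phi>)) $$ (i,j)" .
qed (auto simp: ptrace_mid_def)

lemma coeff_mat_kron_id_mult_vec:
  assumes S: "S \<in> carrier_mat a a" and psi: "\<psi> \<in> carrier_vec (a*b)"
  shows "coeff_mat a b (kron_id a b S *\<^sub>v \<psi>) = S * coeff_mat a b \<psi>"
proof (rule eq_matI)
  fix i j assume "i < dim_row (S * coeff_mat a b \<psi>)" "j < dim_col (S * coeff_mat a b \<psi>)"
  hence i: "i < a" and j: "j < b" using S by auto
  have ij: "i*b + j < a*b" using mult_add_less_mult[OF i j] .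
  have "(kron_id a b S *\<^sub>v \<psi>) $ (i*b + j) = (\<Sum>l<a*b. kron_id a b S $$ (i*b+j, l) * \<psi> $ l)"
    using index_mult_mat_vec_sum[OF kron_id_carrier psi ij] .
  also have "\<dots> = (\<Sum>k<a. \<Sum>y<b. kron_id a b S $$ (i*b+j, k*b+y) * \<psi> $ (k*b+y))"
    by (rule sum_lessThan_mult)
  also have "\<dots> = (\<Sum>k<a. \<Sum>y<b. if y = j then S $$ (i,k) * \<psi> $ (k*b+j) else 0)"
    using ij j mult_add_less_mult by (intro sum.cong refl) (auto simp: kron_id_def)
  also have "\<dots> = (\<Sum>k<a. S $$ (i,k) * \<psi> $ (k*b+j))" using j by (simp add: sum.delta')
  also have "\<dots> = (S * coeff_mat a b \<psi>) $$ (i,j)"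
    using S i j by (simp add: scalar_prod_def lessThan_atLeast0)
  finally show "coeff_mat a b (kron_id a b S *\<^sub>v \<psi>) $$ (i,j) = (S * coeff_mat a b \<psi>) $$ (i,j)"
    using i j by simp
qed (use S in auto)

lemma ptrace_last_outer_prod: "ptrace_mid a b 1 (outer_prod (a*b) \<psi>) = coeff_mat a b \<psi> * adj (coeff_mat a b \<psi>)"
proof (rule eq_matI)
  fix i j assume "i < dim_row (coeff_mat a b \<psi> * adj (coeff_mat a b \<psi>))"
    "j < dim_col (coeff_mat a b \<psi> * adj (coeff_mat a b \<psi>))"
  hence i: "i < a" and j: "j < a" by auto
  show "ptrace_mid a b 1 (outer_prod (a*b) \<psi>) $$ (i,j) = (coeff_mat a b \<psi> * adj (coeff_mat a b \<psi>)) $$ (i,j)"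
    using i j mult_add_less_mult[OF i] mult_add_less_mult[OF j]
      by (auto simp: ptrace_mid_def outer_prod_def scalar_prod_def lessThan_atLeast0 intro!: sum.cong)
qed (auto simp: ptrace_mid_def)

lemma ptrace_mid_smult:
  assumes M: "M \<in> carrier_mat (a*b*c) (a*b*c)"
  shows "ptrace_mid a b c (k \<cdot>\<^sub>m M) = k \<cdot>\<^sub>m ptrace_mid a b c M"
proof (rule eq_matI)
  fix i j assume ij: "i < dim_row (k \<cdot>\<^sub>m ptrace_mid a b c M)" "j < dim_col (k \<cdot>\<^sub>m ptrace_mid a b c M)"
  hence i: "i < a*c" and j: "j < a*c" by (auto simp: ptrace_mid_def)
  have r: "((i div c)*b + l)*c + i mod c < a*b*c" "((j div c)*b + l)*c + j mod c < a*b*c" if l: "l < b" for l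
    using mult_add_less_mult[OF mult_add_less_mult[OF div_less_of_less_mult[OF i] l] mod_less_of_less_mult[OF i]] mult_add_less_mult[OF mult_add_less_mult[OF div_less_of_less_mult[OF j] l] mod_less_of_less_mult[OF j]]
      by auto
  show "ptrace_mid a b c (k \<cdot>\<^sub>m M) $$ (i,j) = (k \<cdot>\<^sub>m ptrace_mid a b c M) $$ (i,j)"
    using i j M r by (simp add: ptrace_mid_def sum_distrib_left)
qed (auto simp: ptrace_mid_def)

lemma ptrace_mid_1_1:
  assumes "X \<in> carrier_mat a a"
  shows "ptrace_mid 1 a 1 X = mat 1 1 (\<lambda>_. mtrace X)"
  using assms by (intro eq_matI) (auto simp: ptrace_mid_def mtrace_def)

lemma kron_id_smult: "kron_id a b (k \<cdot>\<^sub>m X) = k \<cdot>\<^sub>m kron_id a b X" if "X \<in> carrier_mat a a"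
  using that by (intro eq_matI) (auto simp: kron_id_def div_less_of_less_mult)

lemma psd_diag_blocks:
  assumes p: "\<And>x. x < n \<Longrightarrow> psd m (M x)"
  shows "psd (m*n) (diag_blocks m n M)"
proof -
  have h: "hermitian (m*n) (diag_blocks m n M)" using hermitian_diag_blocks p psd_hermitian by blast
  have Mc: "\<And>x. x < n \<Longrightarrow> M x \<in> carrier_mat m m"
    using p unfolding psd_def by auto
  have "0 \<le> Re (\<Sum>i<m*n. cnj (v $ i) * (diag_blocks m n M *\<^sub>v v) $ i)" if v: "v \<in> carrier_vec (m*n)" for v
  proof -
    define cmp where "cmp x = vec m (\<lambda>k. v $ (k*n + x))" for x
    have "(\<Sum>i<m*n. cnj (v $ i) * (diag_blocks m n M *\<^sub>v v) $ i) = (\<Sum>k<m. \<Sum>x<n. cnj (v $ (k*n+x)) * (diag_blocks m n M *\<^sub>v v) $ (k*n+x))"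
      by (rule sum_lessThan_mult)
    also have "\<dots> = (\<Sum>k<m. \<Sum>x<n. cnj (cmp x $ k) * (M x *\<^sub>v cmp x) $ k)"
      using index_diag_blocks_mult_vec[OF Mc v] by (intro sum.cong refl) (auto simp: cmp_def)
    also have "\<dots> = (\<Sum>x<n. \<Sum>k<m. cnj (cmp x $ k) * (M x *\<^sub>v cmp x) $ k)"
      by (rule sum.swap)
    finally have e: "Re (\<Sum>i<m*n. cnj (v $ i) * (diag_blocks m n M *\<^sub>v v) $ i) = (\<Sum>x<n. Re (\<Sum>k<m. cnj (cmp x $ k) * (M x *\<^sub>v cmp x) $ k))"
      by (simp add: Re_sum)
    have "0 \<le> Re (\<Sum>k<m. cnj (cmp x $ k) * (M x *\<^sub>v cmp x) $ k)" if x: "x < n" for x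
    proof -
      have "cmp x \<in> carrier_vec m" by (simp add: cmp_def)
      thus ?thesis using p[OF x] unfolding psd_def by blast
    qed
    thus ?thesis unfolding e by (intro sum_nonneg) auto
  qed
  thus ?thesis using h unfolding psd_def hermitian_def by auto
qed

lemma kron_id_1x1: "kron_id (Suc 0) b (mat (Suc 0) (Suc 0) (\<lambda>_. c)) = c \<cdot>\<^sub>m 1\<^sub>m b"
  by (intro eq_matI) (auto simp: kron_id_def)

lemma mat_pow_diag_blocks_1x1: "mat_pow n (diag_blocks 1 n (\<lambda>x. mat 1 1 (\<lambda>_. complex_of_real (c x)))) a
   = diag_blocks 1 n (\<lambda>x. mat 1 1 (\<lambda>_. complex_of_real (c x powr a)))"
proof -
  have "mat_pow (1*n) (diag_blocks 1 n (\<lambda>x. mat 1 1 (\<lambda>_. complex_of_real (c x)))) a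
     = diag_blocks 1 n (\<lambda>x. mat_fun 1 (\<lambda>x. x powr a) (mat 1 1 (\<lambda>_. complex_of_real (c x))))"
    unfolding mat_pow_def by (rule mat_fun_diag_blocks) (rule hermitian_1x1)
  also have "\<dots> = diag_blocks 1 n (\<lambda>x. mat 1 1 (\<lambda>_. complex_of_real (c x powr a)))"
    using mat_fun_1x1[of "\<lambda>x. x powr a"] by (intro diag_blocks_cong) simp
  finally show ?thesis by simp
qed

lemma mtrace_smult: "M \<in> carrier_mat k k \<Longrightarrow> mtrace (c \<cdot>\<^sub>m M) = c * mtrace M"
  by (simp add: mtrace_def sum_distrib_left)

lemma smult_smult_mat: "a \<cdot>\<^sub>m (b \<cdot>\<^sub>m A) = (a * b) \<cdot>\<^sub>m (A :: complex mat)"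
  by (intro eq_matI) auto

lemma mult_smult_mat3:
  assumes A: "A \<in> carrier_mat m m" and B: "B \<in> carrier_mat m m" and C: "C \<in> carrier_mat m m"
  shows "(a \<cdot>\<^sub>m A) * (b \<cdot>\<^sub>m B) * (c \<cdot>\<^sub>m C) = (a * b * c) \<cdot>\<^sub>m (A * B * (C :: complex mat))"
proof -
  have "(a \<cdot>\<^sub>m A) * (b \<cdot>\<^sub>m B) = (a * b) \<cdot>\<^sub>m (A * B)"
    using mult_smult_assoc_mat[OF A smult_carrier_mat[OF B]] mult_smult_distrib[OF A B] smult_smult_mat
      by simp
  moreover have "((a * b) \<cdot>\<^sub>m (A * B)) * (c \<cdot>\<^sub>m C) = (a * b * c) \<cdot>\<^sub>m (A * B * C)"
    using mult_smult_assoc_mat[OF mult_carrier_mat[OF A B] smult_carrier_mat[OF C]]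
      mult_smult_distrib[OF mult_carrier_mat[OF A B] C] smult_smult_mat by simp
  ultimately show ?thesis by simp
qed

section \<open>A power-mean inequality\<close>

lemma weighted_sum_pos:
  fixes p y :: "nat \<Rightarrow> real"
  assumes "0 < n" "\<And>x. x < n \<Longrightarrow> 0 \<le> p x" "(\<Sum>x<n. p x) = 1" "\<And>x. x < n \<Longrightarrow> 0 < y x"
  shows "0 < (\<Sum>x<n. p x * y x)"
proof -
  obtain x where x: "x < n" "0 < p x"
  proof (rule ccontr)
    assume "\<not> thesis"
    then have "(\<Sum>x<n. p x) \<le> 0"
      using that by (intro sum_nonpos) (meson lessThan_iff not_le)
    then show False
      using assms(3) by simp
  qed
  then show ?thesis
    using assms(2,4) by (intro sum_pos2[of _ x]) (auto intro: mult_nonneg_nonneg less_imp_le)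
qed

text \<open>Jensen's inequality for the convex function \<open>t \<mapsto> t powr r\<close>, in logarithmic form.\<close>

lemma ln_weighted_sum_powr_ge:
  fixes p y :: "nat \<Rightarrow> real"
  assumes n: "0 < n" and p: "\<And>x. x < n \<Longrightarrow> 0 \<le> p x" and ps: "(\<Sum>x<n. p x) = 1"
    and y: "\<And>x. x < n \<Longrightarrow> 0 < y x" and r: "1 \<le> r"
  shows "r * ln (\<Sum>x<n. p x * y x) \<le> ln (\<Sum>x<n. p x * y x powr r)"
proof -
  have A: "0 < (\<Sum>x<n. p x * y x)"
    by (rule weighted_sum_pos[OF n p ps y])
  have "(\<Sum>x<n. p x * y x) powr r \<le> (\<Sum>x<n. p x * y x powr r)"
    using convex_on_sum[OF _ _ powr_convex[OF r] ps, of y] n p y by fastforce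
  then have "ln ((\<Sum>x<n. p x * y x) powr r) \<le> ln (\<Sum>x<n. p x * y x powr r)"
    using A by (intro ln_mono) auto
  then show ?thesis
    using A by simp
qed

lemma ln_weighted_sum_powr_le:
  fixes p y :: "nat \<Rightarrow> real"
  assumes n: "0 < n" and p: "\<And>x. x < n \<Longrightarrow> 0 \<le> p x" and ps: "(\<Sum>x<n. p x) = 1"
    and y: "\<And>x. x < n \<Longrightarrow> 0 < y x" and r: "0 < r" "r \<le> 1"
  shows "ln (\<Sum>x<n. p x * y x powr r) \<le> r * ln (\<Sum>x<n. p x * y x)"
proof -
  have y_r: "0 < y x powr r" if "x < n" for x
    using y[OF that] by simp
  have "1 \<le> 1 / r"
    using r by (simp add: divide_simps)
  then have "(1/r) * ln (\<Sum>x<n. p x * y x powr r) \<le> ln (\<Sum>x<n. p x * (y x powr r) powr (1/r))"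
    using ln_weighted_sum_powr_ge[of n p "\<lambda>x. y x powr r" "1/r"] n p ps y_r by blast
  also have "(\<Sum>x<n. p x * (y x powr r) powr (1/r)) = (\<Sum>x<n. p x * y x)"
    using y r by (intro sum.cong) (auto simp: powr_powr abs_of_pos)
  finally show ?thesis
    using r by (simp add: field_simps)
qed

text \<open>With \<open>\<tau> x = Tr \<sigma>\<^sub>x\<^sup>\<beta>\<close>, the left side is half the conditional mutual information of the
  extension built from an ensemble, the right side the conditional entropy of the ensemble.\<close>

lemma half_renyi_exponent_le:
  fixes p \<tau> :: "nat \<Rightarrow> real"
  assumes n: "0 < n" and p: "\<And>x. x < n \<Longrightarrow> 0 \<le> p x" and ps: "(\<Sum>x<n. p x) = 1"
    and \<tau>: "\<And>x. x < n \<Longrightarrow> 0 < \<tau> x" and \<alpha>: "0 < \<alpha>" "\<alpha> < 2" "\<alpha> \<noteq> 1"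
  defines "\<beta> \<equiv> (2 - \<alpha>) / \<alpha>"
  shows "1/2 * (\<alpha> / (\<alpha> - 1) * ln (\<Sum>x<n. p x * \<tau> x))
           \<le> \<beta> / (1 - \<beta>) * ln (\<Sum>x<n. p x * \<tau> x powr (1 / \<beta>))"
proof -
  define r where "r = \<alpha> / (2 - \<alpha>)"
  define A where "A = ln (\<Sum>x<n. p x * \<tau> x)"
  define B where "B = ln (\<Sum>x<n. p x * \<tau> x powr r)"
  have r_pos: "0 < r" using \<alpha> by (simp add: r_def)
  have lhs: "1/2 * (\<alpha> / (\<alpha> - 1) * A) = (2 - \<alpha>) / (2 * (\<alpha> - 1)) * (r * A)"
    using \<alpha> by (simp add: r_def divide_simps)
  have rhs: "\<beta> / (1 - \<beta>) = (2 - \<alpha>) / (2 * (\<alpha> - 1))" and "1 / \<beta> = r"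
    using \<alpha> by (simp_all add: \<beta>_def r_def divide_simps)
  have "(2 - \<alpha>) / (2 * (\<alpha> - 1)) * (r * A) \<le> (2 - \<alpha>) / (2 * (\<alpha> - 1)) * B"
  proof (cases "1 < \<alpha>")
    case True
    then have "1 \<le> r"
      using \<alpha> by (simp add: r_def divide_simps)
    then have "r * A \<le> B"
      unfolding A_def B_def using ln_weighted_sum_powr_ge[of n p \<tau> r] n p ps \<tau> by blast
    then show ?thesis
      using True \<alpha> by (intro mult_left_mono) auto
  next
    case False
    then have "r \<le> 1"
      using \<alpha> by (simp add: r_def divide_simps)
    then have "B \<le> r * A"
      unfolding A_def B_def
        using ln_weighted_sum_powr_le[of n p \<tau> r] n p ps \<tau> r_pos by blast
    then show ?thesis
      using False \<alpha> by (intro mult_left_mono_neg) (auto intro: divide_nonneg_neg)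
  qed
  then show ?thesis
    unfolding lhs[unfolded A_def] rhs \<open>1 / \<beta> = r\<close> B_def A_def .
qed

lemma diag_blocks_mult3:
  assumes "\<And>x. x < n \<Longrightarrow> A x \<in> carrier_mat m m" "\<And>x. x < n \<Longrightarrow> B x \<in> carrier_mat m m"
    "\<And>x. x < n \<Longrightarrow> C x \<in> carrier_mat m m"
  shows "diag_blocks m n A * diag_blocks m n B * diag_blocks m n C = diag_blocks m n (\<lambda>x. A x * B x * C x)"
proof -
  have "\<And>x. x < n \<Longrightarrow> A x * B x \<in> carrier_mat m m"
    using assms(1,2) by (rule mult_carrier_mat)
  then show ?thesis
    using assms diag_blocks_mult[of n A m B] diag_blocks_mult[of n "\<lambda>x. A x * B x" m C]
      by simp
qed

lemma powr_sandwich_cancel: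
  assumes "0 \<le> (q::real)"
  shows "q powr ((\<alpha>-1)/2) * (q powr ((1-\<alpha>)/2) * q powr \<alpha> * q powr ((1-\<alpha>)/2)) * q powr ((\<alpha>-1)/2) = q powr \<alpha>"
proof (cases "q = 0")
  case False
  then have "q powr ((\<alpha>-1)/2) * (q powr ((1-\<alpha>)/2) * q powr \<alpha> * q powr ((1-\<alpha>)/2)) * q powr ((\<alpha>-1)/2)
      = q powr ((\<alpha>-1)/2 + ((1-\<alpha>)/2 + \<alpha> + (1-\<alpha>)/2) + (\<alpha>-1)/2)"
    by (simp only: powr_add)
  then show ?thesis by (simp add: field_simps)
qed simp

lemma powr_powr_inverse: "0 \<le> (q::real) \<Longrightarrow> a \<noteq> 0 \<Longrightarrow> (q powr a) powr (1/a) = q"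
  by (cases "q = 0") (auto simp: powr_powr)

section \<open>The classical extension of a pure-state ensemble\<close>

lemma renyi_sq_le_extension:
  assumes "0 < dE" "density (dA*dB*dE) \<omega>" "ptrace_mid (dA*dB) dE 1 \<omega> = \<rho>"
  shows "renyi_sq \<alpha> dA dB \<rho> \<le> ereal (1/2 * renyi_cmi \<alpha> dA dB dE \<omega>)"
proof -
  have "Inf {ereal (renyi_cmi \<alpha> dA dB dE' \<omega>') | dE' \<omega>'.
      0 < dE' \<and> density (dA*dB*dE') \<omega>' \<and> ptrace_mid (dA*dB) dE' 1 \<omega>' = \<rho>} \<le> ereal (renyi_cmi \<alpha> dA dB dE \<omega>)"
    using assms by (intro Inf_lower) blast
  then have "ereal (1/2) * Inf {ereal (renyi_cmi \<alpha> dA dB dE' \<omega>') | dE' \<omega>'.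
      0 < dE' \<and> density (dA*dB*dE') \<omega>' \<and> ptrace_mid (dA*dB) dE' 1 \<omega>' = \<rho>}
      \<le> ereal (1/2) * ereal (renyi_cmi \<alpha> dA dB dE \<omega>)"
    by (rule ereal_mult_left_mono) simp
  then show ?thesis
    unfolding renyi_sq_def by simp
qed

locale pure_ensemble =
  fixes dA dB n :: nat and p :: "nat \<Rightarrow> real" and \<psi> :: "nat \<Rightarrow> complex vec"
  assumes n_pos: "0 < n"
    and p_nonneg: "\<And>x. x < n \<Longrightarrow> 0 \<le> p x" and p_sum: "(\<Sum>x<n. p x) = 1"
    and \<psi>_carrier: "\<And>x. x < n \<Longrightarrow> \<psi> x \<in> carrier_vec (dA*dB)"
    and \<psi>_norm: "\<And>x. x < n \<Longrightarrow> (\<Sum>i<dA*dB. cmod (\<psi> x $ i) ^ 2) = 1"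
begin

definition proj :: "nat \<Rightarrow> complex mat" where
  "proj x = outer_prod (dA*dB) (\<psi> x)"

definition reduced :: "nat \<Rightarrow> complex mat" where
  "reduced x = coeff_mat dA dB (\<psi> x) * adj (coeff_mat dA dB (\<psi> x))"

text \<open>The extension \<open>\<omega>\<^sub>A\<^sub>B\<^sub>X = \<Sum>\<^sub>x p x |\<psi>\<^sup>x\<rangle>\<langle>\<psi>\<^sup>x| \<otimes> |x\<rangle>\<langle>x|\<close> of the ensemble average and its
  marginal \<open>\<rho>\<^sub>A\<^sub>X\<close>; \<open>reduced x\<close> is the marginal of \<open>\<psi>\<^sup>x\<close> on A.\<close>

definition extension :: "complex mat" where
  "extension = diag_blocks (dA*dB) n (\<lambda>x. complex_of_real (p x) \<cdot>\<^sub>m proj x)"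

definition reduced_AX :: "complex mat" where
  "reduced_AX = diag_blocks dA n (\<lambda>x. complex_of_real (p x) \<cdot>\<^sub>m reduced x)"

definition tau :: "real \<Rightarrow> nat \<Rightarrow> real" where
  "tau \<beta> x = Re (mtrace (mat_pow dA (reduced x) \<beta>))"

lemma proj_carrier [simp]: "proj x \<in> carrier_mat (dA*dB) (dA*dB)"
  by (simp add: proj_def outer_prod_def)

lemma reduced_carrier [simp]: "reduced x \<in> carrier_mat dA dA"
  unfolding reduced_def by (rule mult_adj_self_carrier[OF coeff_mat_carrier])

lemma psd_reduced: "psd dA (reduced x)"
  unfolding reduced_def by (rule psd_mult_adj[OF coeff_mat_carrier])

lemma hermitian_reduced: "hermitian dA (reduced x)"
  using psd_hermitian[OF psd_reduced] .

lemma hermitian_mat_pow_reduced: "hermitian dA (mat_pow dA (reduced x) a)"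
  by (rule hermitian_mat_pow[OF hermitian_reduced])

lemma mat_pow_reduced_carrier [simp]: "mat_pow dA (reduced x) a \<in> carrier_mat dA dA"
  by (rule mat_pow_carrier[OF hermitian_reduced])

lemma psd_proj: "x < n \<Longrightarrow> psd (dA*dB) (proj x)"
  unfolding proj_def by (rule psd_outer_prod[OF \<psi>_carrier])

lemma \<psi>_norm_complex: "x < n \<Longrightarrow> (\<Sum>i<dA*dB. \<psi> x $ i * cnj (\<psi> x $ i)) = 1"
  using arg_cong[OF \<psi>_norm, of x complex_of_real] by (simp add: mult_cnj_self)

lemma mtrace_proj: "x < n \<Longrightarrow> mtrace (proj x) = 1"
  using \<psi>_norm_complex by (simp add: mtrace_def proj_def outer_prod_def)

lemma reduced_eq_ptrace: "reduced x = ptrace_mid dA dB 1 (proj x)"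
  unfolding reduced_def proj_def by (rule ptrace_last_outer_prod[symmetric])

lemma mtrace_reduced:
  assumes x: "x < n"
  shows "mtrace (reduced x) = 1"
proof -
  have "mtrace (reduced x) = (\<Sum>a<dA. \<Sum>b<dB. \<psi> x $ (a*dB + b) * cnj (\<psi> x $ (a*dB + b)))"
    unfolding mtrace_def reduced_def by (simp add: scalar_prod_def lessThan_atLeast0)
  also have "\<dots> = (\<Sum>i<dA*dB. \<psi> x $ i * cnj (\<psi> x $ i))"
    by (rule sum_lessThan_mult[symmetric])
  finally show ?thesis
    using \<psi>_norm_complex[OF x] by simp
qed

lemma ptrace_extension_AX: "ptrace_mid dA dB n extension = reduced_AX"
proof -
  have "ptrace_mid dA dB n extension = diag_blocks dA n (\<lambda>x. ptrace_mid dA dB 1 (complex_of_real (p x) \<cdot>\<^sub>m proj x))"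
    unfolding extension_def by (rule ptrace_mid_diag_blocks)
  also have "\<dots> = reduced_AX"
    unfolding reduced_AX_def
      by (rule diag_blocks_cong) (simp add: ptrace_mid_smult reduced_eq_ptrace)
  finally show ?thesis .
qed

lemma ptrace_extension_X:
  "ptrace_mid 1 (dA*dB) n extension = diag_blocks 1 n (\<lambda>x. mat 1 1 (\<lambda>_. complex_of_real (p x)))"
proof -
  have "ptrace_mid 1 (dA*dB) n extension
      = diag_blocks 1 n (\<lambda>x. ptrace_mid 1 (dA*dB) 1 (complex_of_real (p x) \<cdot>\<^sub>m proj x))"
    using ptrace_mid_diag_blocks[of 1 "dA*dB" n] by (simp add: extension_def)
  also have "\<dots> = diag_blocks 1 n (\<lambda>x. mat 1 1 (\<lambda>_. complex_of_real (p x)))"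
  proof (rule diag_blocks_cong)
    fix x assume x: "x < n"
    have "ptrace_mid 1 (dA*dB) 1 (complex_of_real (p x) \<cdot>\<^sub>m proj x)
        = complex_of_real (p x) \<cdot>\<^sub>m mat 1 1 (\<lambda>_. mtrace (proj x))"
      using ptrace_mid_smult[of "proj x" 1 "dA*dB" 1] ptrace_mid_1_1[of "proj x" "dA*dB"] by simp
    then show "ptrace_mid 1 (dA*dB) 1 (complex_of_real (p x) \<cdot>\<^sub>m proj x) = mat 1 1 (\<lambda>_. complex_of_real (p x))"
      using mtrace_proj[OF x] by (auto intro!: eq_matI)
  qed
  finally show ?thesis .
qed

lemma ptrace_extension_AB: "ptrace_mid (dA*dB) n 1 extension = ens_avg n (dA*dB) p \<psi>"
proof (rule eq_matI)
  fix i j assume "i < dim_row (ens_avg n (dA*dB) p \<psi>)" "j < dim_col (ens_avg n (dA*dB) p \<psi>)"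
  then have i: "i < dA*dB" and j: "j < dA*dB" by (auto simp: ens_avg_def)
  have "ptrace_mid (dA*dB) n 1 extension $$ (i,j) = (\<Sum>k<n. extension $$ (i*n + k, j*n + k))"
    using i j by (simp add: ptrace_mid_def)
  also have "\<dots> = (\<Sum>k<n. complex_of_real (p k) * (\<psi> k $ i) * cnj (\<psi> k $ j))"
    using i j mult_add_less_mult[OF i] mult_add_less_mult[OF j]
    by (intro sum.cong refl) (simp add: extension_def index_diag_blocks proj_def outer_prod_def)
  finally show "ptrace_mid (dA*dB) n 1 extension $$ (i,j) = ens_avg n (dA*dB) p \<psi> $$ (i,j)"
    using i j by (simp add: ens_avg_def)
qed (auto simp: ptrace_mid_def ens_avg_def)

lemma density_extension: "density (dA*dB*n) extension"
proof -
  have "psd (dA*dB*n) extension"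
    unfolding extension_def by (rule psd_diag_blocks) (simp add: psd_smult psd_proj p_nonneg)
  moreover have "mtrace extension = (\<Sum>x<n. mtrace (complex_of_real (p x) \<cdot>\<^sub>m proj x))"
    unfolding extension_def by (rule mtrace_diag_blocks) simp
  moreover have "\<dots> = (\<Sum>x<n. complex_of_real (p x))"
    by (intro sum.cong refl) (simp add: mtrace_smult[OF proj_carrier] mtrace_proj)
  ultimately show ?thesis
    unfolding density_def using p_sum by (simp flip: of_real_sum)
qed

lemma mat_pow_extension:
  "mat_pow (dA*dB*n) extension a = diag_blocks (dA*dB) n (\<lambda>x. complex_of_real (p x powr a) \<cdot>\<^sub>m proj x)"
proof -
  have "mat_pow (dA*dB*n) extension a
      = diag_blocks (dA*dB) n (\<lambda>x. mat_pow (dA*dB) (complex_of_real (p x) \<cdot>\<^sub>m proj x) a)"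
    unfolding mat_pow_def extension_def
    by (rule mat_fun_diag_blocks) (simp add: psd_hermitian psd_smult psd_proj p_nonneg)
  also have "\<dots> = diag_blocks (dA*dB) n (\<lambda>x. complex_of_real (p x powr a) \<cdot>\<^sub>m proj x)"
  proof (rule diag_blocks_cong)
    fix x assume x: "x < n"
    have "mat_pow (dA*dB) (proj x) a = proj x"
      unfolding proj_def by (rule mat_pow_outer_prod[OF \<psi>_carrier[OF x] \<psi>_norm[OF x]])
    then show "mat_pow (dA*dB) (complex_of_real (p x) \<cdot>\<^sub>m proj x) a = complex_of_real (p x powr a) \<cdot>\<^sub>m proj x"
      using mat_pow_smult[OF psd_proj[OF x] p_nonneg[OF x]] by simp
  qed
  finally show ?thesis .
qed

lemma mat_pow_reduced_AX:
  "mat_pow (dA*n) reduced_AX a = diag_blocks dA n (\<lambda>x. complex_of_real (p x powr a) \<cdot>\<^sub>m mat_pow dA (reduced x) a)"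
proof -
  have "mat_pow (dA*n) reduced_AX a = diag_blocks dA n (\<lambda>x. mat_pow dA (complex_of_real (p x) \<cdot>\<^sub>m reduced x) a)"
    unfolding mat_pow_def reduced_AX_def
    by (rule mat_fun_diag_blocks) (simp add: psd_hermitian psd_smult psd_reduced p_nonneg)
  also have "\<dots> = diag_blocks dA n (\<lambda>x. complex_of_real (p x powr a) \<cdot>\<^sub>m mat_pow dA (reduced x) a)"
    by (rule diag_blocks_cong) (simp add: mat_pow_smult psd_reduced p_nonneg)
  finally show ?thesis .
qed

lemma tau_pos:
  assumes x: "x < n"
  shows "0 < tau \<beta> x"
proof -
  obtain d where d1: "mtrace (reduced x) = complex_of_real (\<Sum>i<dA. d i)"
    and d2: "mtrace (mat_pow dA (reduced x) \<beta>) = complex_of_real (\<Sum>i<dA. on_support (\<lambda>t. t powr \<beta>) (d i))"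
    and d3: "\<forall>i<dA. 0 \<le> d i"
    using mtrace_mat_fun_spectrum[OF hermitian_reduced, of x "\<lambda>t. t powr \<beta>"] psd_reduced
    unfolding mat_pow_def by blast
  have "complex_of_real (\<Sum>i<dA. d i) = 1"
    using d1 mtrace_reduced[OF x] by simp
  then have "(\<Sum>i<dA. d i) = 1"
    by (simp only: of_real_eq_1_iff)
  obtain i where i: "i < dA" "0 < d i"
  proof (rule ccontr)
    assume "\<not> thesis"
    then have "(\<Sum>i<dA. d i) \<le> 0"
      using that by (intro sum_nonpos) (meson lessThan_iff not_le)
    with \<open>(\<Sum>i<dA. d i) = 1\<close> show False by simp
  qed
  have "tau \<beta> x = (\<Sum>i<dA. d i powr \<beta>)"
    unfolding tau_def d2 by simp
  also have "\<dots> \<ge> d i powr \<beta>"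
    using i d3 by (intro member_le_sum) auto
  moreover have "0 < d i powr \<beta>"
    using i by simp
  ultimately show ?thesis
    by linarith
qed

lemma swap_ptrace_cq_state: "swap_sys n dA (ptrace_mid (n*dA) dB 1 (cq_state n (dA*dB) p \<psi>)) = reduced_AX"
proof (rule eq_matI)
  fix i j assume "i < dim_row reduced_AX" "j < dim_col reduced_AX"
  hence i: "i < dA*n" and j: "j < dA*n" by (auto simp: reduced_AX_def)
  have mi: "i mod n < n" "j mod n < n" using mod_less_of_less_mult i j by auto
  have di: "i div n < dA" "j div n < dA" using div_less_of_less_mult i j by auto
  have r: "(i mod n)*dA + i div n < n*dA" "(j mod n)*dA + j div n < n*dA"
    using mult_add_less_mult mi di by auto
  have "swap_sys n dA (ptrace_mid (n*dA) dB 1 (cq_state n (dA*dB) p \<psi>)) $$ (i,j)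
     = (\<Sum>k<dB. cq_state n (dA*dB) p \<psi> $$ (((i mod n)*dA + i div n)*dB + k, ((j mod n)*dA + j div n)*dB + k))"
    using i j r by (simp add: swap_sys_def ptrace_mid_def mult.commute)
  also have "\<dots> = (\<Sum>k<dB. if i mod n = j mod n then complex_of_real (p (i mod n)) * (\<psi> (i mod n) $ ((i div n)*dB + k)) * cnj (\<psi> (j mod n) $ ((j div n)*dB + k)) else 0)"
  proof (intro sum.cong refl)
    fix k assume k: "k \<in> {..<dB}"
    have e: "((i mod n)*dA + i div n)*dB + k = (i mod n)*(dA*dB) + ((i div n)*dB + k)"
      "((j mod n)*dA + j div n)*dB + k = (j mod n)*(dA*dB) + ((j div n)*dB + k)"
        by (simp_all add: algebra_simps)
    have l: "(i div n)*dB + k < dA*dB" "(j div n)*dB + k < dA*dB"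
      using mult_add_less_mult di k by auto
    have l2: "(i mod n)*(dA*dB) + ((i div n)*dB + k) < n*(dA*dB)" "(j mod n)*(dA*dB) + ((j div n)*dB + k) < n*(dA*dB)"
      using mult_add_less_mult[OF mi(1) l(1)] mult_add_less_mult[OF mi(2) l(2)] by auto
    show "cq_state n (dA*dB) p \<psi> $$ (((i mod n)*dA + i div n)*dB + k, ((j mod n)*dA + j div n)*dB + k) =
      (if i mod n = j mod n then complex_of_real (p (i mod n)) * (\<psi> (i mod n) $ ((i div n)*dB + k)) * cnj (\<psi> (j mod n) $ ((j div n)*dB + k)) else 0)"
      unfolding e using l l2 by (simp add: cq_state_def div_mod_mult_add)
  qed
  also have "\<dots> = reduced_AX $$ (i,j)"
    using i j mi di
      by (auto simp: reduced_AX_def index_diag_blocks reduced_def coeff_mat_def scalar_prod_def lessThan_atLeast0 sum_distrib_left mult.assoc)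
  finally show "swap_sys n dA (ptrace_mid (n*dA) dB 1 (cq_state n (dA*dB) p \<psi>)) $$ (i,j) = reduced_AX $$ (i,j)" .
qed (auto simp: reduced_AX_def swap_sys_def ptrace_mid_def)

lemma renyi_cond_ent_cq_state:
  assumes \<beta>: "0 < \<beta>"
  shows "renyi_cond_ent \<beta> dA n (swap_sys n dA (ptrace_mid (n*dA) dB 1 (cq_state n (dA*dB) p \<psi>)))
           = \<beta> / (1 - \<beta>) * ln (\<Sum>x<n. p x * tau \<beta> x powr (1 / \<beta>))"
proof -
  have "ptrace_mid 1 dA n (mat_pow (dA*n) reduced_AX \<beta>)
      = diag_blocks 1 n (\<lambda>x. ptrace_mid 1 dA 1 (complex_of_real (p x powr \<beta>) \<cdot>\<^sub>m mat_pow dA (reduced x) \<beta>))"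
    using ptrace_first_diag_blocks[of dA 1 n] by (simp add: mat_pow_reduced_AX)
  also have "\<dots> = diag_blocks 1 n (\<lambda>x. mat 1 1 (\<lambda>_. complex_of_real (p x powr \<beta> * tau \<beta> x)))"
  proof (rule diag_blocks_cong)
    fix x
    have "mtrace (mat_pow dA (reduced x) \<beta>) = complex_of_real (tau \<beta> x)"
      using hermitian_mtrace_real[OF hermitian_mat_pow_reduced] by (simp add: tau_def)
    then show "ptrace_mid 1 dA 1 (complex_of_real (p x powr \<beta>) \<cdot>\<^sub>m mat_pow dA (reduced x) \<beta>)
        = mat 1 1 (\<lambda>_. complex_of_real (p x powr \<beta> * tau \<beta> x))"
      using ptrace_mid_1_1[of "complex_of_real (p x powr \<beta>) \<cdot>\<^sub>m mat_pow dA (reduced x) \<beta>" dA]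
      by (simp add: mtrace_smult[OF mat_pow_reduced_carrier])
  qed
  finally have pt: "ptrace_mid 1 dA n (mat_pow (dA*n) reduced_AX \<beta>)
      = diag_blocks 1 n (\<lambda>x. mat 1 1 (\<lambda>_. complex_of_real (p x powr \<beta> * tau \<beta> x)))" .
  have "mtrace (diag_blocks 1 n (\<lambda>x. mat 1 1 (\<lambda>_. complex_of_real ((p x powr \<beta> * tau \<beta> x) powr (1/\<beta>)))))
      = (\<Sum>x<n. complex_of_real ((p x powr \<beta> * tau \<beta> x) powr (1/\<beta>)))"
    by (subst mtrace_diag_blocks) (auto simp: mtrace_def)
  also have "\<dots> = (\<Sum>x<n. complex_of_real (p x * tau \<beta> x powr (1/\<beta>)))"
    using p_nonneg tau_pos \<beta>
    by (intro sum.cong refl) (simp add: powr_mult less_imp_le powr_powr_inverse)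
  finally show ?thesis
    unfolding renyi_cond_ent_def swap_ptrace_cq_state pt mat_pow_diag_blocks_1x1
    by (simp flip: of_real_sum)
qed

definition tilt :: "real \<Rightarrow> nat \<Rightarrow> complex mat" where
  "tilt \<alpha> x = kron_id dA dB (mat_pow dA (reduced x) ((1 - \<alpha>)/2))"

definition tilted :: "real \<Rightarrow> nat \<Rightarrow> complex vec" where
  "tilted \<alpha> x = tilt \<alpha> x *\<^sub>v \<psi> x"

text \<open>The marginal on B of the projector onto the tilted vector is \<open>adj Z * Z\<close> for this \<open>Z\<close>.\<close>

definition tilted_coeff :: "real \<Rightarrow> nat \<Rightarrow> complex mat" where
  "tilted_coeff \<alpha> x = map_mat cnj (coeff_mat dA dB (tilted \<alpha> x))"

lemma tilt_carrier [simp]: "tilt \<alpha> x \<in> carrier_mat (dA*dB) (dA*dB)"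
  by (simp add: tilt_def)

lemma hermitian_tilt: "hermitian (dA*dB) (tilt \<alpha> x)"
  unfolding tilt_def by (rule hermitian_kron_id[OF hermitian_mat_pow_reduced])

lemma tilted_carrier: "x < n \<Longrightarrow> tilted \<alpha> x \<in> carrier_vec (dA*dB)"
  unfolding tilted_def using mult_mat_vec_carrier[OF tilt_carrier \<psi>_carrier] by simp

lemma tilted_coeff_carrier [simp]: "tilted_coeff \<alpha> x \<in> carrier_mat dA dB"
  by (simp add: tilted_coeff_def)

lemma psd_tilted_gram: "psd dB (adj (tilted_coeff \<alpha> x) * tilted_coeff \<alpha> x)"
  using psd_mult_adj[OF adj_carrier[OF tilted_coeff_carrier]] by simp

lemma tilted_gram_carrier [simp]: "adj (tilted_coeff \<alpha> x) * tilted_coeff \<alpha> x \<in> carrier_mat dB dB"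
  by (meson adj_carrier mult_carrier_mat tilted_coeff_carrier)

lemma coeff_tilted_mult_adj:
  assumes x: "x < n"
  shows "coeff_mat dA dB (tilted \<alpha> x) * adj (coeff_mat dA dB (tilted \<alpha> x)) = mat_pow dA (reduced x) (2 - \<alpha>)"
proof -
  define S where "S = mat_pow dA (reduced x) ((1-\<alpha>)/2)"
  define C where "C = coeff_mat dA dB (\<psi> x)"
  have S: "S \<in> carrier_mat dA dA" and adj_S: "adj S = S"
    using hermitian_mat_pow_reduced by (auto simp: S_def hermitian_def)
  have C: "C \<in> carrier_mat dA dB" by (simp add: C_def)
  have "coeff_mat dA dB (tilted \<alpha> x) = S * C"
    unfolding tilted_def tilt_def S_def C_def
      by (rule coeff_mat_kron_id_mult_vec[OF _ \<psi>_carrier[OF x]]) simp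
  then have "coeff_mat dA dB (tilted \<alpha> x) * adj (coeff_mat dA dB (tilted \<alpha> x)) = S * C * (adj C * S)"
    using adj_mult[OF S C] adj_S by simp
  also have "\<dots> = S * (C * (adj C * S))"
    using assoc_mult_mat[OF S C mult_carrier_mat[OF adj_carrier[OF C] S]] .
  also have "C * (adj C * S) = C * adj C * S"
    using assoc_mult_mat[OF C adj_carrier[OF C] S] by simp
  also have "S * (C * adj C * S) = S * (C * adj C) * S"
    using assoc_mult_mat[OF S mult_adj_self_carrier[OF C] S] by simp
  also have "\<dots> = mat_pow dA (reduced x) (2 * ((1-\<alpha>)/2) + 1)"
    unfolding S_def C_def reduced_def[symmetric] by (rule mat_pow_sandwich[OF psd_reduced])
  also have "2 * ((1-\<alpha>)/2) + 1 = 2 - \<alpha>"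
    by simp
  finally show ?thesis .
qed

lemma mtrace_tilted_gram_pow:
  assumes x: "x < n"
  shows "Re (mtrace (mat_pow dB (adj (tilted_coeff \<alpha> x) * tilted_coeff \<alpha> x) (1/\<alpha>))) = tau ((2 - \<alpha>)/\<alpha>) x"
proof -
  define \<Phi> where "\<Phi> = coeff_mat dA dB (tilted \<alpha> x)"
  have PP: "\<Phi> * adj \<Phi> = mat_pow dA (reduced x) (2 - \<alpha>)"
    unfolding \<Phi>_def by (rule coeff_tilted_mult_adj[OF x])
  have hPP: "hermitian dA (\<Phi> * adj \<Phi>)"
    unfolding PP by (rule hermitian_mat_pow_reduced)
  have "mtrace (mat_pow dB (adj (tilted_coeff \<alpha> x) * tilted_coeff \<alpha> x) (1/\<alpha>))
      = mtrace (mat_pow dA (tilted_coeff \<alpha> x * adj (tilted_coeff \<alpha> x)) (1/\<alpha>))"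
    unfolding mat_pow_def by (rule mtrace_mat_fun_adj_mult_comm[OF tilted_coeff_carrier])
  also have "tilted_coeff \<alpha> x * adj (tilted_coeff \<alpha> x) = map_mat cnj (\<Phi> * adj \<Phi>)"
    unfolding tilted_coeff_def \<Phi>_def by (rule map_mat_cnj_mult_adj[symmetric])
  also have "mat_pow dA (map_mat cnj (\<Phi> * adj \<Phi>)) (1/\<alpha>) = map_mat cnj (mat_pow dA (\<Phi> * adj \<Phi>) (1/\<alpha>))"
    unfolding mat_pow_def by (rule mat_fun_map_mat_cnj[OF hPP])
  also have "mtrace \<dots> = cnj (mtrace (mat_pow dA (\<Phi> * adj \<Phi>) (1/\<alpha>)))"
    by (rule mtrace_map_mat_cnj[OF mat_pow_carrier[OF hPP]])
  also have "mat_pow dA (\<Phi> * adj \<Phi>) (1/\<alpha>) = mat_pow dA (reduced x) ((2 - \<alpha>) * (1/\<alpha>))"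
    unfolding PP by (rule mat_pow_mat_pow[OF psd_reduced])
  finally show ?thesis
    by (simp add: tau_def)
qed

lemma sandwich_extension:
  "id_mid dA dB n (mat_pow (dA*n) reduced_AX ((1 - \<alpha>)/2)) * mat_pow (dA*dB*n) extension \<alpha>
     * id_mid dA dB n (mat_pow (dA*n) reduced_AX ((1 - \<alpha>)/2))
   = diag_blocks (dA*dB) n (\<lambda>x. complex_of_real (p x powr ((1 - \<alpha>)/2) * p x powr \<alpha> * p x powr ((1 - \<alpha>)/2))
        \<cdot>\<^sub>m outer_prod (dA*dB) (tilted \<alpha> x))"
  (is "?S * _ * ?S = _")
proof -
  let ?s = "(1 - \<alpha>)/2"
  have "?S = diag_blocks (dA*dB) n (\<lambda>x. complex_of_real (p x powr ?s) \<cdot>\<^sub>m tilt \<alpha> x)"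
    unfolding mat_pow_reduced_AX id_mid_diag_blocks
    by (rule diag_blocks_cong) (simp add: kron_id_smult tilt_def)
  then have "?S * mat_pow (dA*dB*n) extension \<alpha> * ?S
      = diag_blocks (dA*dB) n (\<lambda>x. (complex_of_real (p x powr ?s) \<cdot>\<^sub>m tilt \<alpha> x)
          * (complex_of_real (p x powr \<alpha>) \<cdot>\<^sub>m proj x) * (complex_of_real (p x powr ?s) \<cdot>\<^sub>m tilt \<alpha> x))"
    unfolding mat_pow_extension by (simp add: diag_blocks_mult3)
  also have "\<dots> = diag_blocks (dA*dB) n (\<lambda>x. complex_of_real (p x powr ?s * p x powr \<alpha> * p x powr ?s)
        \<cdot>\<^sub>m outer_prod (dA*dB) (tilted \<alpha> x))"
  proof (rule diag_blocks_cong)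
    fix x assume x: "x < n"
    show "(complex_of_real (p x powr ?s) \<cdot>\<^sub>m tilt \<alpha> x) * (complex_of_real (p x powr \<alpha>) \<cdot>\<^sub>m proj x)
          * (complex_of_real (p x powr ?s) \<cdot>\<^sub>m tilt \<alpha> x)
        = complex_of_real (p x powr ?s * p x powr \<alpha> * p x powr ?s) \<cdot>\<^sub>m outer_prod (dA*dB) (tilted \<alpha> x)"
      using mult_smult_mat3[OF tilt_carrier proj_carrier tilt_carrier]
        hermitian_sandwich_outer_prod[OF hermitian_tilt \<psi>_carrier[OF x]]
      unfolding proj_def tilted_def by simp
  qed
  finally show ?thesis .
qed

lemma ptrace_sandwich_extension:
  "ptrace_mid 1 dA (dB*n) (id_mid dA dB n (mat_pow (dA*n) reduced_AX ((1 - \<alpha>)/2)) * mat_pow (dA*dB*n) extension \<alpha>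
     * id_mid dA dB n (mat_pow (dA*n) reduced_AX ((1 - \<alpha>)/2)))
   = diag_blocks dB n (\<lambda>x. complex_of_real (p x powr ((1 - \<alpha>)/2) * p x powr \<alpha> * p x powr ((1 - \<alpha>)/2))
        \<cdot>\<^sub>m (adj (tilted_coeff \<alpha> x) * tilted_coeff \<alpha> x))"
  unfolding sandwich_extension ptrace_first_diag_blocks
proof (rule diag_blocks_cong)
  fix x assume x: "x < n"
  show "ptrace_mid 1 dA dB (complex_of_real (p x powr ((1 - \<alpha>)/2) * p x powr \<alpha> * p x powr ((1 - \<alpha>)/2))
          \<cdot>\<^sub>m outer_prod (dA*dB) (tilted \<alpha> x))
      = complex_of_real (p x powr ((1 - \<alpha>)/2) * p x powr \<alpha> * p x powr ((1 - \<alpha>)/2))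
          \<cdot>\<^sub>m (adj (tilted_coeff \<alpha> x) * tilted_coeff \<alpha> x)"
    using ptrace_mid_smult[of "outer_prod (dA*dB) (tilted \<alpha> x)" 1 dA dB]
      ptrace_first_outer_prod[OF tilted_carrier[OF x]]
    unfolding tilted_coeff_def by (simp add: outer_prod_def)
qed

text \<open>Conjugating by \<open>\<rho>\<^sub>X\<^sup>(\<^sup>\<alpha>\<^sup>-\<^sup>1\<^sup>)\<^sup>/\<^sup>2\<close> cancels the remaining powers of \<open>p\<close>.\<close>

lemma conditioned_sandwich_extension:
  assumes \<alpha>: "0 < \<alpha>"
  shows "id_mid 1 dB n (mat_pow n (ptrace_mid 1 (dA*dB) n extension) ((\<alpha> - 1)/2))
     * ptrace_mid 1 dA (dB*n) (id_mid dA dB n (mat_pow (dA*n) reduced_AX ((1 - \<alpha>)/2)) * mat_pow (dA*dB*n) extension \<alpha>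
       * id_mid dA dB n (mat_pow (dA*n) reduced_AX ((1 - \<alpha>)/2)))
     * id_mid 1 dB n (mat_pow n (ptrace_mid 1 (dA*dB) n extension) ((\<alpha> - 1)/2))
   = diag_blocks dB n (\<lambda>x. complex_of_real (p x powr \<alpha>) \<cdot>\<^sub>m (adj (tilted_coeff \<alpha> x) * tilted_coeff \<alpha> x))"
proof -
  let ?s = "(1 - \<alpha>)/2" and ?t = "(\<alpha> - 1)/2"
  have R: "id_mid 1 dB n (mat_pow n (ptrace_mid 1 (dA*dB) n extension) ?t)
      = diag_blocks dB n (\<lambda>x. complex_of_real (p x powr ?t) \<cdot>\<^sub>m 1\<^sub>m dB)"
    unfolding ptrace_extension_X mat_pow_diag_blocks_1x1 using id_mid_diag_blocks[of 1 dB n]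
    by (simp add: kron_id_1x1)
  let ?G = "\<lambda>x. adj (tilted_coeff \<alpha> x) * tilted_coeff \<alpha> x"
  have "diag_blocks dB n (\<lambda>x. complex_of_real (p x powr ?t) \<cdot>\<^sub>m 1\<^sub>m dB)
      * diag_blocks dB n (\<lambda>x. complex_of_real (p x powr ?s * p x powr \<alpha> * p x powr ?s) \<cdot>\<^sub>m ?G x)
      * diag_blocks dB n (\<lambda>x. complex_of_real (p x powr ?t) \<cdot>\<^sub>m 1\<^sub>m dB)
    = diag_blocks dB n (\<lambda>x. (complex_of_real (p x powr ?t) \<cdot>\<^sub>m 1\<^sub>m dB)
      * (complex_of_real (p x powr ?s * p x powr \<alpha> * p x powr ?s) \<cdot>\<^sub>m ?G x)
      * (complex_of_real (p x powr ?t) \<cdot>\<^sub>m 1\<^sub>m dB))"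
    by (rule diag_blocks_mult3) simp_all
  also have "\<dots> = diag_blocks dB n (\<lambda>x. complex_of_real (p x powr \<alpha>) \<cdot>\<^sub>m ?G x)"
  proof (rule diag_blocks_cong)
    fix x assume x: "x < n"
    have scal: "complex_of_real (p x powr ?t) * complex_of_real (p x powr ?s * p x powr \<alpha> * p x powr ?s)
        * complex_of_real (p x powr ?t) = complex_of_real (p x powr \<alpha>)"
      by (simp only: of_real_mult[symmetric] powr_sandwich_cancel[OF p_nonneg[OF x]])
    have "(a \<cdot>\<^sub>m 1\<^sub>m dB) * (b \<cdot>\<^sub>m G) * (c \<cdot>\<^sub>m 1\<^sub>m dB) = (a * b * c) \<cdot>\<^sub>m G"
      if G: "G \<in> carrier_mat dB dB" for a b c and G :: "complex mat"
      using mult_smult_mat3[OF one_carrier_mat G one_carrier_mat] G by simp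
    then show "(complex_of_real (p x powr ?t) \<cdot>\<^sub>m 1\<^sub>m dB)
          * (complex_of_real (p x powr ?s * p x powr \<alpha> * p x powr ?s) \<cdot>\<^sub>m (adj (tilted_coeff \<alpha> x) * tilted_coeff \<alpha> x))
          * (complex_of_real (p x powr ?t) \<cdot>\<^sub>m 1\<^sub>m dB)
        = complex_of_real (p x powr \<alpha>) \<cdot>\<^sub>m (adj (tilted_coeff \<alpha> x) * tilted_coeff \<alpha> x)"
      by (simp only: scal tilted_gram_carrier)
  qed
  finally show ?thesis
    unfolding R ptrace_sandwich_extension .
qed

lemma renyi_cmi_extension:
  assumes \<alpha>: "0 < \<alpha>"
  shows "renyi_cmi \<alpha> dA dB n extension = \<alpha> / (\<alpha> - 1) * ln (\<Sum>x<n. p x * tau ((2 - \<alpha>)/\<alpha>) x)"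
proof -
  have "mat_pow (dB*n) (diag_blocks dB n (\<lambda>x. complex_of_real (p x powr \<alpha>) \<cdot>\<^sub>m (adj (tilted_coeff \<alpha> x) * tilted_coeff \<alpha> x))) (1/\<alpha>)
      = diag_blocks dB n (\<lambda>x. mat_pow dB (complex_of_real (p x powr \<alpha>) \<cdot>\<^sub>m (adj (tilted_coeff \<alpha> x) * tilted_coeff \<alpha> x)) (1/\<alpha>))"
    unfolding mat_pow_def
      by (rule mat_fun_diag_blocks) (simp add: psd_hermitian psd_smult psd_tilted_gram)
  also have "\<dots> = diag_blocks dB n (\<lambda>x. complex_of_real (p x) \<cdot>\<^sub>m mat_pow dB (adj (tilted_coeff \<alpha> x) * tilted_coeff \<alpha> x) (1/\<alpha>))"
    using \<alpha>
      by (intro diag_blocks_cong) (simp add: mat_pow_smult psd_tilted_gram p_nonneg powr_powr_inverse)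
  finally have pow: "mat_pow (dB*n) (diag_blocks dB n (\<lambda>x. complex_of_real (p x powr \<alpha>) \<cdot>\<^sub>m (adj (tilted_coeff \<alpha> x) * tilted_coeff \<alpha> x))) (1/\<alpha>)
      = diag_blocks dB n (\<lambda>x. complex_of_real (p x) \<cdot>\<^sub>m mat_pow dB (adj (tilted_coeff \<alpha> x) * tilted_coeff \<alpha> x) (1/\<alpha>))" .
  have gram_pow: "mat_pow dB (adj (tilted_coeff \<alpha> x) * tilted_coeff \<alpha> x) (1/\<alpha>) \<in> carrier_mat dB dB" for x
    by (rule mat_pow_carrier[OF psd_hermitian[OF psd_tilted_gram]])
  have "Re (mtrace (diag_blocks dB n (\<lambda>x. complex_of_real (p x) \<cdot>\<^sub>m mat_pow dB (adj (tilted_coeff \<alpha> x) * tilted_coeff \<alpha> x) (1/\<alpha>))))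
      = (\<Sum>x<n. p x * Re (mtrace (mat_pow dB (adj (tilted_coeff \<alpha> x) * tilted_coeff \<alpha> x) (1/\<alpha>))))"
    by (subst mtrace_diag_blocks) (simp_all add: gram_pow mtrace_smult[OF gram_pow] Re_sum)
  also have "\<dots> = (\<Sum>x<n. p x * tau ((2 - \<alpha>)/\<alpha>) x)"
    by (intro sum.cong refl) (simp add: mtrace_tilted_gram_pow)
  finally have tr: "Re (mtrace (diag_blocks dB n (\<lambda>x. complex_of_real (p x) \<cdot>\<^sub>m
      mat_pow dB (adj (tilted_coeff \<alpha> x) * tilted_coeff \<alpha> x) (1/\<alpha>)))) = (\<Sum>x<n. p x * tau ((2 - \<alpha>)/\<alpha>) x)" .
  show ?thesis
    unfolding renyi_cmi_def Let_def ptrace_extension_AX conditioned_sandwich_extension[OF \<alpha>] pow tr ..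
qed

lemma renyi_sq_le_renyi_cond_ent:
  assumes \<alpha>: "0 < \<alpha>" "\<alpha> < 2" "\<alpha> \<noteq> 1"
  shows "renyi_sq \<alpha> dA dB (ens_avg n (dA*dB) p \<psi>)
    \<le> ereal (renyi_cond_ent ((2-\<alpha>)/\<alpha>) dA n (swap_sys n dA (ptrace_mid (n*dA) dB 1 (cq_state n (dA*dB) p \<psi>))))"
proof -
  have "renyi_sq \<alpha> dA dB (ens_avg n (dA*dB) p \<psi>) \<le> ereal (1/2 * renyi_cmi \<alpha> dA dB n extension)"
    by (rule renyi_sq_le_extension[OF n_pos density_extension ptrace_extension_AB])
  also have "1/2 * renyi_cmi \<alpha> dA dB n extension
      \<le> renyi_cond_ent ((2-\<alpha>)/\<alpha>) dA n (swap_sys n dA (ptrace_mid (n*dA) dB 1 (cq_state n (dA*dB) p \<psi>)))"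
  proof -
    have "0 < (2-\<alpha>)/\<alpha>" using \<alpha> by simp
    then show ?thesis
      unfolding renyi_cmi_extension[OF \<alpha>(1)] renyi_cond_ent_cq_state[OF \<open>0 < (2-\<alpha>)/\<alpha>\<close>]
      using \<alpha> by (intro half_renyi_exponent_le n_pos p_nonneg p_sum tau_pos)
  qed
  finally show ?thesis by simp
qed

end

theorem proposition6:
  fixes \<alpha> :: real and dA dB :: nat and \<rho> :: "complex mat"
  assumes "0 < \<alpha>" and "\<alpha> < 2" and "\<alpha> \<noteq> 1"
    and "0 < dA" and "0 < dB"
    and "density (dA*dB) \<rho>"
  shows "renyi_eof ((2-\<alpha>)/\<alpha>) dA dB \<rho> \<ge> renyi_sq \<alpha> dA dB \<rho>"
  unfolding renyi_eof_def
  using pure_ensemble.renyi_sq_le_renyi_cond_ent[OF _ assms(1-3)]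
  by (auto intro!: Inf_greatest simp: pure_ensemble_def)

end
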